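(* Let $A$ be a set. Let $(G,S)$ and $(H,S)$ be two compatible $d$-labeled boundaried graphs, let $\mathcal{B}$ be the set of blocks of $G[S]$ with at least two vertices, and let $g:\mathcal{B}\to A$ be a function such that (i) each $S$-block of $G$ or $H$ is chordal, (ii) $\mathbf{Aux}(G,S)\oplus\mathbf{Aux}(H,S)$ has no cycles, and (iii) for all $B_1,B_2\in\mathcal{B}$ that are contained in a common $S$-block of $G$ or in a common $S$-block of $H$, $g(B_1)=g(B_2)$. If $F$ is an $S$-block of $(G,S)\oplus(H,S)$ and $B_1,B_2\in\mathcal{B}$ satisfy $V(B_1),V(B_2)\subseteq V(F)$, then $g(B_1)=g(B_2)$.
   Context: A block of a graph is a maximal connected subgraph without a cut vertex; a graph is chordal if it has no induced cycle of length at least $4$. A block $d$-labeling of a graph whose blocks have at most $d$ vertices is a map $V(G)\to[d]$ injective on each block; a $d$-labeled boundaried graph is a pair $(G,S)$ with $S\subseteq V(G)$ and $G$ carrying such a labeling. $(G,S)$ and $(H,S)$ are compatible if $V(G-S)\cap V(H-S)=\emptyset$, $G[S]=H[S]$, and labels agree on $S$. The sum $(G,S)\oplus(H,S)$ is the graph obtained from the disjoint union of $G$ and $H$ by identifying corresponding vertices of $S$ and removing duplicate edges inside $S$. An $S$-block of a graph containing $S$ is a block of it containing an edge of $G[S]$. $\mathbf{Aux}(G,S)$ is the bipartite graph whose vertices are the connected components of $G$ and the connected components of $G[S]$, a component $C_1$ of $G$ adjacent to a component $C_2$ of $G[S]$ iff $C_2\subseteq C_1$; $\mathbf{Aux}(G,S)\oplus\mathbf{Aux}(H,S)$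 is the disjoint union of $\mathbf{Aux}(G,S)$ and $\mathbf{Aux}(H,S)$ with the vertices corresponding to the same component of $G[S]=H[S]$ identified. *)

theory Defs
  imports Main
begin

type_synonym 'v graph = "'v set \<times> 'v set set"

definition verts :: "'v graph \<Rightarrow> 'v set" where "verts G = fst G"
definition edges :: "'v graph \<Rightarrow> 'v set set" where "edges G = snd G"

definition wf_graph :: "'v graph \<Rightarrow> bool" where
  "wf_graph G \<longleftrightarrow> finite (verts G) \<and>
     (\<forall>e\<in>edges G. \<exists>u v. e = {u, v} \<and> u \<noteq> v \<and> u \<in> verts G \<and> v \<in> verts G)"

definition subgraph :: "'v graph \<Rightarrow> 'v graph \<Rightarrow> bool" where
  "subgraph H G \<longleftrightarrow> wf_graph H \<and> verts H \<subseteq> verts G \<and> edges H \<subseteq> edges G"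

definition induced :: "'v graph \<Rightarrow> 'v set \<Rightarrow> 'v graph" where
  "induced G X = (verts G \<inter> X, {e \<in> edges G. e \<subseteq> X})"

definition gunion :: "'v graph \<Rightarrow> 'v graph \<Rightarrow> 'v graph" where
  "gunion G H = (verts G \<union> verts H, edges G \<union> edges H)"

definition adj :: "'v graph \<Rightarrow> 'v \<Rightarrow> 'v \<Rightarrow> bool" where
  "adj G u v \<longleftrightarrow> {u, v} \<in> edges G"

definition connected_graph :: "'v graph \<Rightarrow> bool" where
  "connected_graph G \<longleftrightarrow> verts G \<noteq> {} \<and>
     (\<forall>u\<in>verts G. \<forall>v\<in>verts G. (adj G)\<^sup>*\<^sup>* u v)"

definition comps :: "'v graph \<Rightarrow> 'v set set" where
  "comps G = {{v \<in> verts G. (adj G)\<^sup>*\<^sup>* u v} | u. u \<in> verts G}"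

text \<open>A cut vertex: its removal increases the number of components, i.e. it
  separates two vertices lying in a common component.\<close>
definition cut_vertex :: "'v graph \<Rightarrow> 'v \<Rightarrow> bool" where
  "cut_vertex G v \<longleftrightarrow> v \<in> verts G \<and>
     (\<exists>u w. u \<in> verts G - {v} \<and> w \<in> verts G - {v} \<and> (adj G)\<^sup>*\<^sup>* u w \<and>
            \<not> (adj (induced G (verts G - {v})))\<^sup>*\<^sup>* u w)"

definition biconn :: "'v graph \<Rightarrow> bool" where
  "biconn B \<longleftrightarrow> connected_graph B \<and> (\<forall>v. \<not> cut_vertex B v)"

definition is_block :: "'v graph \<Rightarrow> 'v graph \<Rightarrow> bool" where
  "is_block G B \<longleftrightarrow> subgraph B G \<and> biconn B \<and>
     (\<forall>B'. subgraph B' G \<and> biconn B' \<and> subgraph B B' \<longrightarrow> B' = B)"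

definition cyc_adj :: "nat \<Rightarrow> nat \<Rightarrow> nat \<Rightarrow> bool" where
  "cyc_adj n i j \<longleftrightarrow> j = Suc i mod n \<or> i = Suc j mod n"

definition induced_cycle :: "'v graph \<Rightarrow> 'v list \<Rightarrow> bool" where
  "induced_cycle G vs \<longleftrightarrow> distinct vs \<and> length vs \<ge> 3 \<and> set vs \<subseteq> verts G \<and>
     (\<forall>i<length vs. \<forall>j<length vs. i \<noteq> j \<longrightarrow>
        ({vs ! i, vs ! j} \<in> edges G \<longleftrightarrow> cyc_adj (length vs) i j))"

definition chordal :: "'v graph \<Rightarrow> bool" where
  "chordal G \<longleftrightarrow> \<not> (\<exists>vs. induced_cycle G vs \<and> length vs \<ge> 4)"

definition has_cycle :: "'v graph \<Rightarrow> bool" where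
  "has_cycle G \<longleftrightarrow> (\<exists>vs. distinct vs \<and> length vs \<ge> 3 \<and> set vs \<subseteq> verts G \<and>
     (\<forall>i<length vs. {vs ! i, vs ! (Suc i mod length vs)} \<in> edges G))"

definition block_labeling :: "nat \<Rightarrow> 'v graph \<Rightarrow> ('v \<Rightarrow> nat) \<Rightarrow> bool" where
  "block_labeling d G lab \<longleftrightarrow>
     (\<forall>B. is_block G B \<longrightarrow> card (verts B) \<le> d \<and> inj_on lab (verts B)) \<and>
     (\<forall>v\<in>verts G. lab v \<in> {1..d})"

definition labeled_boundaried :: "nat \<Rightarrow> 'v graph \<Rightarrow> 'v set \<Rightarrow> ('v \<Rightarrow> nat) \<Rightarrow> bool" where
  "labeled_boundaried d G S lab \<longleftrightarrow> wf_graph G \<and> S \<subseteq> verts G \<and> block_labeling d G lab"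

definition compatible ::
  "'v graph \<Rightarrow> ('v \<Rightarrow> nat) \<Rightarrow> 'v graph \<Rightarrow> ('v \<Rightarrow> nat) \<Rightarrow> 'v set \<Rightarrow> bool" where
  "compatible G labG H labH S \<longleftrightarrow>
     (verts G - S) \<inter> (verts H - S) = {} \<and> induced G S = induced H S \<and>
     (\<forall>v\<in>S. labG v = labH v)"

text \<open>Since the vertex sets outside S are disjoint and S is shared literally,
  the boundaried sum is the union of the two graphs (duplicate edges inside S
  disappear automatically).\<close>
definition bsum :: "'v graph \<Rightarrow> 'v graph \<Rightarrow> 'v graph" where
  "bsum G H = gunion G H"

definition S_block :: "'v graph \<Rightarrow> 'v set \<Rightarrow> 'v graph \<Rightarrow> bool" where
  "S_block G S F \<longleftrightarrow> is_block G F \<and> (\<exists>e\<in>edges (induced G S). e \<in> edges F)"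

text \<open>Components of G (resp. H)
  are tagged GC (resp. HC), components of G[S] = H[S] are tagged SC, so that the
  union of the two auxiliary graphs is exactly their sum (identification of the
  G[S]-components).\<close>
datatype 'v auxv = GC "'v set" | HC "'v set" | SC "'v set"

definition aux :: "('v set \<Rightarrow> 'v auxv) \<Rightarrow> 'v graph \<Rightarrow> 'v set \<Rightarrow> 'v auxv graph" where
  "aux tag G S = (tag ` comps G \<union> SC ` comps (induced G S),
     {{tag C, SC D} | C D. C \<in> comps G \<and> D \<in> comps (induced G S) \<and> D \<subseteq> C})"

definition aux_sum :: "'v graph \<Rightarrow> 'v graph \<Rightarrow> 'v set \<Rightarrow> 'v auxv graph" where
  "aux_sum G H S = gunion (aux GC G S) (aux HC H S)"

definition nontriv_blocks :: "'v graph \<Rightarrow> 'v graph set" where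
  "nontriv_blocks G = {B. is_block G B \<and> card (verts B) \<ge> 2}"

end

theory Submission
  imports Defs
begin

text \<open>
  Call two edges of \<open>G \<oplus> H\<close> linked if they lie in a common block of \<open>G\<close> or of \<open>H\<close>.
  All edges of a cycle of the sum are linked (in the transitive closure). This is clear for a cycle
  inside \<open>G\<close> or inside \<open>H\<close>. Otherwise, since the auxiliary graph is a forest, the cycle passes
  twice through one component of \<open>G[S]\<close>, between arcs that both leave \<open>S\<close>; a path of \<open>G[S]\<close>
  joining the two points splits the cycle into two cycles with fewer vertices outside \<open>S\<close>
  sharing the edges of that path, and induction applies. A block of the sum grows from any of its
  edges by adding ears, which are cycles, so all its edges are linked. Finally the value of \<open>g\<close>
  travels along linked edges: two distinct blocks of \<open>G\<close> or \<open>H\<close> sharing an edge can only share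
  an edge of \<open>G[S]\<close>, and by (iii) \<open>g\<close> is constant on the blocks of \<open>G[S]\<close> inside one \<open>S\<close>-block.
\<close>
section \<open>Graphs and blocks\<close>

lemma verts_induced [simp]: "verts (induced G X) = verts G \<inter> X"
  by (simp add: induced_def verts_def)

lemma edges_induced [simp]: "edges (induced G X) = {e \<in> edges G. e \<subseteq> X}"
  by (simp add: induced_def edges_def)

lemma verts_gunion [simp]: "verts (gunion G H) = verts G \<union> verts H"
  by (simp add: gunion_def verts_def)

lemma edges_gunion [simp]: "edges (gunion G H) = edges G \<union> edges H"
  by (simp add: gunion_def edges_def)

lemma verts_pair [simp]: "verts (V, E) = V"
  by (simp add: verts_def)

lemma edges_pair [simp]: "edges (V, E) = E"
  by (simp add: edges_def)

lemma graph_eqI: "verts A = verts B \<Longrightarrow> edges A = edges B \<Longrightarrow> A = B"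
  by (simp add: verts_def edges_def prod_eq_iff)

lemma adj_commute: "adj G u v = adj G v u"
  by (simp add: adj_def insert_commute)

lemma adj_induced [simp]: "adj (induced G X) u v \<longleftrightarrow> adj G u v \<and> u \<in> X \<and> v \<in> X"
  by (auto simp: adj_def)

lemma wf_graph_edgeE:
  assumes "wf_graph G" "e \<in> edges G"
  obtains u v where "e = {u, v}" "u \<noteq> v" "u \<in> verts G" "v \<in> verts G"
  using assms unfolding wf_graph_def by meson

lemma wf_graph_edge_subset: "wf_graph G \<Longrightarrow> e \<in> edges G \<Longrightarrow> e \<subseteq> verts G"
  by (erule wf_graph_edgeE) auto

lemma wf_graph_adjD: "wf_graph G \<Longrightarrow> adj G u v \<Longrightarrow> u \<in> verts G \<and> v \<in> verts G \<and> u \<noteq> v"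
  unfolding adj_def by (erule wf_graph_edgeE) (auto simp: doubleton_eq_iff)

lemma wf_graph_finite_edges: "wf_graph G \<Longrightarrow> finite (edges G)"
proof -
  assume "wf_graph G"
  then have "edges G \<subseteq> Pow (verts G)" "finite (verts G)"
    using wf_graph_edge_subset unfolding wf_graph_def by blast+
  then show ?thesis by (meson finite_Pow_iff finite_subset)
qed

lemma rtranclp_adj_sym: "(adj G)\<^sup>*\<^sup>* u v \<Longrightarrow> (adj G)\<^sup>*\<^sup>* v u"
  by (metis adj_commute symp_rtranclp sympD sympI)

lemma rtranclp_adj_trans_sym: "(adj G)\<^sup>*\<^sup>* w u \<Longrightarrow> (adj G)\<^sup>*\<^sup>* w v \<Longrightarrow> (adj G)\<^sup>*\<^sup>* u v"
  by (meson rtranclp_adj_sym rtranclp_trans)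

lemma rtranclp_adj_mono: "edges G \<subseteq> edges H \<Longrightarrow> (adj G)\<^sup>*\<^sup>* u v \<Longrightarrow> (adj H)\<^sup>*\<^sup>* u v"
  by (metis adj_def mono_rtranclp subsetD)

lemma rtranclp_adj_induced_in: "(adj (induced G X))\<^sup>*\<^sup>* u v \<Longrightarrow> u \<in> X \<Longrightarrow> v \<in> X"
  by (induction rule: rtranclp_induct) auto

lemma subgraph_trans: "subgraph A B \<Longrightarrow> subgraph B C \<Longrightarrow> subgraph A C"
  unfolding subgraph_def by blast

lemma subgraph_wf: "subgraph A B \<Longrightarrow> wf_graph A"
  unfolding subgraph_def by blast

lemma subgraph_antisym: "subgraph A B \<Longrightarrow> subgraph B A \<Longrightarrow> A = B"
  unfolding subgraph_def by (auto intro: graph_eqI)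

lemma wf_graph_induced:
  assumes "wf_graph G" shows "wf_graph (induced G X)"
  unfolding wf_graph_def
proof (intro conjI ballI)
  show "finite (verts (induced G X))" using assms unfolding wf_graph_def by simp
  fix e assume "e \<in> edges (induced G X)"
  then have "e \<in> edges G" "e \<subseteq> X" by auto
  then show "\<exists>u v. e = {u, v} \<and> u \<noteq> v \<and> u \<in> verts (induced G X) \<and> v \<in> verts (induced G X)"
    using assms by (elim wf_graph_edgeE) auto
qed

lemma wf_graph_gunion:
  assumes "wf_graph G" "wf_graph H" shows "wf_graph (gunion G H)"
  unfolding wf_graph_def
proof (intro conjI ballI)
  show "finite (verts (gunion G H))" using assms unfolding wf_graph_def by simp
  fix e assume "e \<in> edges (gunion G H)"
  then consider "e \<in> edges G" | "e \<in> edges H" by auto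
  then show "\<exists>u v. e = {u, v} \<and> u \<noteq> v \<and> u \<in> verts (gunion G H) \<and> v \<in> verts (gunion G H)"
  proof cases
    case 1
    with assms(1) show ?thesis by (elim wf_graph_edgeE) auto
  next
    case 2
    with assms(2) show ?thesis by (elim wf_graph_edgeE) auto
  qed
qed

lemma subgraph_gunion:
  "subgraph X G \<Longrightarrow> subgraph Y G \<Longrightarrow> subgraph (gunion X Y) G"
  unfolding subgraph_def by (auto intro: wf_graph_gunion)

lemma subgraph_gunion_left: "wf_graph X \<Longrightarrow> wf_graph Y \<Longrightarrow> subgraph X (gunion X Y)"
  unfolding subgraph_def by auto

lemma biconn_rtranclp_adj: "biconn X \<Longrightarrow> u \<in> verts X \<Longrightarrow> v \<in> verts X \<Longrightarrow> (adj X)\<^sup>*\<^sup>* u v"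
  unfolding biconn_def connected_graph_def by blast

lemma biconn_avoid:
  assumes "wf_graph X" "biconn X" "u \<in> verts X" "v \<in> verts X" "u \<noteq> w" "v \<noteq> w"
  shows "(adj (induced X (verts X - {w})))\<^sup>*\<^sup>* u v"
proof (cases "w \<in> verts X")
  case True
  have "(adj X)\<^sup>*\<^sup>* u v" using assms(2-4) by (rule biconn_rtranclp_adj)
  moreover have "\<not> cut_vertex X w" using assms(2) unfolding biconn_def by blast
  ultimately show ?thesis using True assms(3-6) unfolding cut_vertex_def by blast
next
  case False
  have "induced X (verts X - {w}) = X"
    using False wf_graph_edge_subset[OF assms(1)] by (auto intro: graph_eqI)
  then show ?thesis using biconn_rtranclp_adj[OF assms(2-4)] by simp
qed

lemma biconnI:
  assumes "verts X \<noteq> {}"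
    and "\<And>u v. u \<in> verts X \<Longrightarrow> v \<in> verts X \<Longrightarrow> (adj X)\<^sup>*\<^sup>* u v"
    and "\<And>w u v. w \<in> verts X \<Longrightarrow> u \<in> verts X \<Longrightarrow> v \<in> verts X \<Longrightarrow> u \<noteq> w \<Longrightarrow> v \<noteq> w \<Longrightarrow>
          (adj (induced X (verts X - {w})))\<^sup>*\<^sup>* u v"
  shows "biconn X"
  using assms unfolding biconn_def connected_graph_def cut_vertex_def by blast

lemma block_subgraph: "is_block G B \<Longrightarrow> subgraph B G"
  unfolding is_block_def by blast

lemma block_biconn: "is_block G B \<Longrightarrow> biconn B"
  unfolding is_block_def by blast

lemma block_wf: "is_block G B \<Longrightarrow> wf_graph B"
  using block_subgraph subgraph_wf by blast

lemma biconn_gunion: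
  assumes wX: "wf_graph X" and wY: "wf_graph Y" and bX: "biconn X" and bY: "biconn Y"
    and c: "c1 \<noteq> c2" "c1 \<in> verts X" "c1 \<in> verts Y" "c2 \<in> verts X" "c2 \<in> verts Y"
  shows "biconn (gunion X Y)"
proof (rule biconnI)
  show "verts (gunion X Y) \<noteq> {}" using c by auto
  have to_c1: "(adj (gunion X Y))\<^sup>*\<^sup>* c1 u" if "u \<in> verts (gunion X Y)" for u
  proof -
    have "u \<in> verts X \<or> u \<in> verts Y" using that by simp
    then show ?thesis
    proof
      assume "u \<in> verts X"
      then have "(adj X)\<^sup>*\<^sup>* c1 u" using biconn_rtranclp_adj[OF bX c(2)] by blast
      then show ?thesis by (rule rtranclp_adj_mono[rotated]) auto
    next
      assume "u \<in> verts Y"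
      then have "(adj Y)\<^sup>*\<^sup>* c1 u" using biconn_rtranclp_adj[OF bY c(3)] by blast
      then show ?thesis by (rule rtranclp_adj_mono[rotated]) auto
    qed
  qed
  fix u v assume "u \<in> verts (gunion X Y)" "v \<in> verts (gunion X Y)"
  then show "(adj (gunion X Y))\<^sup>*\<^sup>* u v" by (intro rtranclp_adj_trans_sym[OF to_c1 to_c1])
next
  fix w u v assume uv: "w \<in> verts (gunion X Y)" "u \<in> verts (gunion X Y)" "v \<in> verts (gunion X Y)"
    "u \<noteq> w" "v \<noteq> w"
  obtain c where c: "c \<in> verts X" "c \<in> verts Y" "c \<noteq> w" using c by blast
  let ?U = "induced (gunion X Y) (verts (gunion X Y) - {w})"
  have to_c: "(adj ?U)\<^sup>*\<^sup>* c a" if "a \<in> verts (gunion X Y)" "a \<noteq> w" for a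
  proof -
    have "a \<in> verts X \<or> a \<in> verts Y" using that by simp
    then show ?thesis
    proof
      assume "a \<in> verts X"
      then have "(adj (induced X (verts X - {w})))\<^sup>*\<^sup>* c a"
        using biconn_avoid[OF wX bX c(1) _ c(3) that(2)] by blast
      then show ?thesis by (rule rtranclp_adj_mono[rotated]) auto
    next
      assume "a \<in> verts Y"
      then have "(adj (induced Y (verts Y - {w})))\<^sup>*\<^sup>* c a"
        using biconn_avoid[OF wY bY c(2) _ c(3) that(2)] by blast
      then show ?thesis by (rule rtranclp_adj_mono[rotated]) auto
    qed
  qed
  show "(adj ?U)\<^sup>*\<^sup>* u v" using to_c[OF uv(2,4)] to_c[OF uv(3,5)] by (rule rtranclp_adj_trans_sym)
qed

lemma exists_maximal_subgraph:
  assumes w: "wf_graph G" and P0: "P B0" and sub: "\<And>B. P B \<Longrightarrow> subgraph B G"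
  obtains B where "P B" "\<And>B'. P B' \<Longrightarrow> subgraph B B' \<Longrightarrow> B' = B"
proof -
  define weight where "weight B = card (verts B) + card (edges B)" for B :: "'a graph"
  have fV: "finite (verts G)" using w unfolding wf_graph_def by blast
  have fE: "finite (edges G)" using w by (rule wf_graph_finite_edges)
  have bound: "\<forall>B. P B \<longrightarrow> weight B < card (verts G) + card (edges G) + 1"
  proof (intro allI impI)
    fix B assume "P B"
    then have "verts B \<subseteq> verts G" "edges B \<subseteq> edges G" using sub unfolding subgraph_def by blast+
    then have "card (verts B) \<le> card (verts G)" "card (edges B) \<le> card (edges G)"
      using fV fE card_mono by blast+
    then show "weight B < card (verts G) + card (edges G) + 1" unfolding weight_def by simp
  qed
  obtain B where B: "P B" "\<forall>B'. P B' \<longrightarrow> weight B' \<le> weight B"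
    using ex_has_greatest_nat[of P B0 weight, OF P0 bound] by blast
  show ?thesis
  proof (rule that[OF B(1)])
    fix B' assume B': "P B'" "subgraph B B'"
    have sV: "verts B \<subseteq> verts B'" and sE: "edges B \<subseteq> edges B'"
      using B'(2) unfolding subgraph_def by blast+
    have "verts B' \<subseteq> verts G" "edges B' \<subseteq> edges G" using sub[OF B'(1)] unfolding subgraph_def
      by blast+
    then have fV': "finite (verts B')" and fE': "finite (edges B')" using fV fE finite_subset
      by blast+
    have "card (verts B) \<le> card (verts B')" "card (edges B) \<le> card (edges B')"
      using card_mono[OF fV' sV] card_mono[OF fE' sE] .
    moreover have "weight B' \<le> weight B" using B(2) B'(1) by blast
    ultimately have "card (verts B) = card (verts B')" "card (edges B) = card (edges B')"
      unfolding weight_def by linarith+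
    then show "B' = B"
      using card_subset_eq[OF fV' sV] card_subset_eq[OF fE' sE] by (intro graph_eqI) auto
  qed
qed

lemma ex_block_containing:
  assumes w: "wf_graph G" and X: "subgraph X G" "biconn X"
  obtains B where "is_block G B" "subgraph X B"
proof -
  let ?P = "\<lambda>B. subgraph B G \<and> biconn B \<and> subgraph X B"
  have "wf_graph X" using X(1) by (rule subgraph_wf)
  then have "?P X" using X unfolding subgraph_def by blast
  then obtain B where B: "?P B" "\<And>B'. ?P B' \<Longrightarrow> subgraph B B' \<Longrightarrow> B' = B"
    using exists_maximal_subgraph[of G ?P X, OF w] by blast
  have "is_block G B" unfolding is_block_def
  proof (intro conjI allI impI)
    show "subgraph B G" "biconn B" using B(1) by blast+
    fix B' assume "subgraph B' G \<and> biconn B' \<and> subgraph B B'"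
    then show "B' = B" using B(1) B(2)[of B'] subgraph_trans[of X B B'] by blast
  qed
  then show ?thesis using that B(1) by blast
qed

text \<open>A block absorbs every biconnected subgraph sharing two vertices with it, since their
  union is again biconnected.\<close>

lemma subgraph_block_if_two_common_verts:
  assumes w: "wf_graph G" and B: "is_block G B" and X: "subgraph X G" "biconn X"
    and c: "c1 \<noteq> c2" "c1 \<in> verts X" "c1 \<in> verts B" "c2 \<in> verts X" "c2 \<in> verts B"
  shows "subgraph X B"
proof -
  have wX: "wf_graph X" and wB: "wf_graph B" using X(1) block_wf[OF B] subgraph_wf by blast+
  let ?U = "gunion X B"
  have "biconn ?U" using biconn_gunion[OF wX wB X(2) block_biconn[OF B] c] .
  moreover have "subgraph ?U G" using subgraph_gunion[OF X(1) block_subgraph[OF B]] .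
  moreover have "subgraph B ?U" using wB wX unfolding subgraph_def by auto
  ultimately have "?U = B" using B unfolding is_block_def by blast
  then show ?thesis using subgraph_gunion_left[OF wX wB] by simp
qed

lemma block_eq_if_two_common_verts:
  assumes w: "wf_graph G" and B: "is_block G B" and B': "is_block G B'"
    and c: "c1 \<noteq> c2" "c1 \<in> verts B" "c1 \<in> verts B'" "c2 \<in> verts B" "c2 \<in> verts B'"
  shows "B = B'"
  using subgraph_block_if_two_common_verts[OF w B' block_subgraph[OF B] block_biconn[OF B] c]
    subgraph_block_if_two_common_verts[OF w B block_subgraph[OF B'] block_biconn[OF B'] c(1,3,2,5,4)]
  by (rule subgraph_antisym)

definition edge_graph :: "'v \<Rightarrow> 'v \<Rightarrow> 'v graph" where
  "edge_graph u v = ({u, v}, {{u, v}})"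

lemma verts_edge_graph [simp]: "verts (edge_graph u v) = {u, v}"
  by (simp add: edge_graph_def)

lemma edges_edge_graph [simp]: "edges (edge_graph u v) = {{u, v}}"
  by (simp add: edge_graph_def)

lemma biconn_edge_graph: "u \<noteq> v \<Longrightarrow> biconn (edge_graph u v)"
proof (rule biconnI)
  have "adj (edge_graph u v) u v" "adj (edge_graph u v) v u" by (auto simp: adj_def insert_commute)
  then show "(adj (edge_graph u v))\<^sup>*\<^sup>* a b"
    if "a \<in> verts (edge_graph u v)" "b \<in> verts (edge_graph u v)" for a b
    using that by auto
qed auto

lemma subgraph_edge_graph:
  assumes "wf_graph G" "{u, v} \<in> edges G" "u \<noteq> v"
  shows "subgraph (edge_graph u v) G"
proof -
  have "u \<in> verts G" "v \<in> verts G" using wf_graph_edge_subset[OF assms(1,2)] by auto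
  moreover have "wf_graph (edge_graph u v)" unfolding wf_graph_def using assms(3) by auto
  ultimately show ?thesis using assms(2) unfolding subgraph_def by auto
qed

lemma block_contains_edge:
  assumes w: "wf_graph G" and B: "is_block G B" and e: "{u, v} \<in> edges G" "u \<noteq> v"
    and uv: "u \<in> verts B" "v \<in> verts B"
  shows "{u, v} \<in> edges B"
  using subgraph_block_if_two_common_verts[OF w B subgraph_edge_graph[OF w e]
      biconn_edge_graph[OF e(2)] e(2)] uv
  unfolding subgraph_def by simp

lemma ex_block_with_edge:
  assumes w: "wf_graph G" and e: "e \<in> edges G"
  obtains B where "is_block G B" "e \<in> edges B"
proof -
  obtain u v where uv: "e = {u, v}" "u \<noteq> v" using wf_graph_edgeE[OF w e] by metis
  obtain B where "is_block G B" "subgraph (edge_graph u v) B"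
    using ex_block_containing[OF w subgraph_edge_graph[OF w _ uv(2)] biconn_edge_graph[OF uv(2)]]
      e uv(1) by blast
  then show ?thesis using that uv(1) unfolding subgraph_def by auto
qed

section \<open>Walks and cycles as vertex lists\<close>

fun walk_edges :: "'v list \<Rightarrow> 'v set set" where
  "walk_edges (a # b # xs) = insert {a, b} (walk_edges (b # xs))"
| "walk_edges _ = {}"

lemma walk_edges_Cons:
  "walk_edges (a # xs) = (if xs = [] then {} else insert {a, hd xs} (walk_edges xs))"
  by (cases xs) auto

lemma walk_edges_append:
  "xs \<noteq> [] \<Longrightarrow> ys \<noteq> [] \<Longrightarrow>
    walk_edges (xs @ ys) = walk_edges xs \<union> walk_edges ys \<union> {{last xs, hd ys}}"
proof (induction xs)
  case (Cons a xs)
  then show ?case by (cases "xs = []") (auto simp: walk_edges_Cons)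
qed simp

lemma walk_edges_split: "walk_edges (xs @ v # ys) = walk_edges (xs @ [v]) \<union> walk_edges (v # ys)"
proof (induction xs)
  case (Cons a xs)
  then show ?case by (cases xs) auto
qed simp

lemma walk_edges_append_left: "walk_edges xs \<subseteq> walk_edges (xs @ ys)"
  by (cases "xs = [] \<or> ys = []") (auto simp: walk_edges_append)

lemma walk_edges_append_right: "walk_edges ys \<subseteq> walk_edges (xs @ ys)"
  by (cases "xs = [] \<or> ys = []") (auto simp: walk_edges_append)

lemma walk_edges_infix: "walk_edges ys \<subseteq> walk_edges (xs @ ys @ zs)"
  using walk_edges_append_left[of ys zs] walk_edges_append_right[of "ys @ zs" xs] by blast

lemma walk_edges_rev: "walk_edges (rev xs) = walk_edges xs"
proof (induction xs)
  case (Cons a xs)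
  show ?case
  proof (cases "xs = []")
    case False
    have "walk_edges (rev xs @ [a]) = walk_edges (rev xs) \<union> {{last (rev xs), a}}"
      using walk_edges_append[of "rev xs" "[a]"] False by simp
    then show ?thesis using Cons False by (auto simp: walk_edges_Cons last_rev insert_commute)
  qed simp
qed simp

lemma walk_edges_subset_set: "e \<in> walk_edges xs \<Longrightarrow> e \<subseteq> set xs"
  by (induction xs rule: walk_edges.induct) auto

lemma walk_edges_distinct_edge:
  "distinct xs \<Longrightarrow> e \<in> walk_edges xs \<Longrightarrow> \<exists>u v. e = {u, v} \<and> u \<noteq> v \<and> u \<in> set xs \<and> v \<in> set xs"
  by (induction xs rule: walk_edges.induct) auto

lemma walk_edges_nth: "walk_edges xs \<subseteq> E \<Longrightarrow> Suc i < length xs \<Longrightarrow> {xs ! i, xs ! Suc i} \<in> E"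
proof (induction xs arbitrary: i rule: walk_edges.induct)
  case (1 a b ys)
  then show ?case by (cases i) auto
qed auto

lemma set_subset_walk_edges: "set xs \<subseteq> insert (hd xs) (\<Union> (walk_edges xs))"
  by (induction xs rule: walk_edges.induct) auto

lemma walk_set_subset:
  assumes "walk_edges xs \<subseteq> E" "hd xs \<in> V" "\<And>e. e \<in> E \<Longrightarrow> e \<subseteq> V"
  shows "set xs \<subseteq> V"
  using set_subset_walk_edges[of xs] assms by blast

lemma rtranclp_adj_hd_walk:
  "walk_edges xs \<subseteq> edges X \<Longrightarrow> x \<in> set xs \<Longrightarrow> (adj X)\<^sup>*\<^sup>* (hd xs) x"
proof (induction xs rule: walk_edges.induct)
  case (1 a b ys)
  have ab: "adj X a b" using 1(2) by (auto simp: adj_def)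
  show ?case
  proof (cases "x = a")
    case False
    then have "(adj X)\<^sup>*\<^sup>* b x" using 1 by auto
    then show ?thesis using ab by (simp add: converse_rtranclp_into_rtranclp)
  qed simp
qed auto

lemma rtranclp_adj_walk:
  assumes "walk_edges xs \<subseteq> edges X" "x \<in> set xs" "y \<in> set xs"
  shows "(adj X)\<^sup>*\<^sup>* x y"
  using rtranclp_adj_hd_walk[OF assms(1,2)] rtranclp_adj_hd_walk[OF assms(1,3)]
  by (rule rtranclp_adj_trans_sym)

lemma rtranclp_adj_walk_exists:
  assumes "(adj X)\<^sup>*\<^sup>* a b"
  shows "\<exists>xs. xs \<noteq> [] \<and> hd xs = a \<and> last xs = b \<and> walk_edges xs \<subseteq> edges X"
  using assms
proof (induction rule: rtranclp_induct)
  case base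
  then show ?case by (intro exI[of _ "[a]"]) auto
next
  case (step y z)
  then obtain xs where xs: "xs \<noteq> []" "hd xs = a" "last xs = y" "walk_edges xs \<subseteq> edges X"
    by blast
  have "walk_edges (xs @ [z]) = walk_edges xs \<union> {{y, z}}"
    using walk_edges_append[of xs "[z]"] xs by simp
  then show ?case using xs step(2) by (intro exI[of _ "xs @ [z]"]) (auto simp: adj_def)
qed

lemma walk_shorten_distinct:
  assumes "xs \<noteq> []" "walk_edges xs \<subseteq> E"
  shows "\<exists>ys. ys \<noteq> [] \<and> hd ys = hd xs \<and> last ys = last xs \<and> walk_edges ys \<subseteq> E \<and>
    distinct ys \<and> set ys \<subseteq> set xs"
  using assms
proof (induction "length xs" arbitrary: xs rule: less_induct)
  case less
  show ?case
  proof (cases "distinct xs")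
    case True then show ?thesis using less.prems by blast
  next
    case False
    then obtain p m n v where d: "xs = p @ [v] @ m @ [v] @ n" using not_distinct_decomp by blast
    let ?ys = "p @ [v] @ n"
    have "walk_edges ?ys = walk_edges (p @ [v]) \<union> walk_edges (v # n)"
      using walk_edges_split[of p v n] by simp
    also have "\<dots> \<subseteq> walk_edges xs"
      using walk_edges_append_left[of "p @ [v]" "m @ [v] @ n"]
        walk_edges_append_right[of "v # n" "p @ [v] @ m"] d by auto
    finally have "walk_edges ?ys \<subseteq> E" using less.prems by blast
    moreover have "hd ?ys = hd xs" "last ?ys = last xs" using d by (cases p; cases n; simp)+
    moreover have "set ?ys \<subseteq> set xs" using d by auto
    moreover have "length ?ys < length xs" "?ys \<noteq> []" using d by simp_all
    ultimately obtain zs where "zs \<noteq> []" "hd zs = hd xs" "last zs = last xs" "walk_edges zs \<subseteq> E"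
      "distinct zs" "set zs \<subseteq> set xs"
      using less.hyps by (metis order_trans)
    then show ?thesis by blast
  qed
qed

lemma rtranclp_adj_path_exists:
  assumes "(adj X)\<^sup>*\<^sup>* a b"
  obtains xs where "xs \<noteq> []" "hd xs = a" "last xs = b" "walk_edges xs \<subseteq> edges X" "distinct xs"
proof -
  obtain xs where xs: "xs \<noteq> []" "hd xs = a" "last xs = b" "walk_edges xs \<subseteq> edges X"
    using rtranclp_adj_walk_exists[OF assms] by blast
  obtain ys where "ys \<noteq> []" "hd ys = hd xs" "last ys = last xs" "walk_edges ys \<subseteq> edges X"
    "distinct ys"
    using walk_shorten_distinct[OF xs(1,4)] by blast
  then show ?thesis using that xs(2,3) by blast
qed

text \<open>A cycle is a list of distinct vertices, closed up by the edge from its last vertex back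
  to its first one.\<close>

definition cycle_edges :: "'v list \<Rightarrow> 'v set set" where
  "cycle_edges zs = walk_edges (zs @ [hd zs])"

definition is_cycle :: "'v set set \<Rightarrow> 'v list \<Rightarrow> bool" where
  "is_cycle E zs \<longleftrightarrow> distinct zs \<and> 3 \<le> length zs \<and> cycle_edges zs \<subseteq> E"

definition cycle_graph :: "'v list \<Rightarrow> 'v graph" where
  "cycle_graph zs = (set zs, cycle_edges zs)"

lemma verts_cycle_graph [simp]: "verts (cycle_graph zs) = set zs"
  by (simp add: cycle_graph_def)

lemma edges_cycle_graph [simp]: "edges (cycle_graph zs) = cycle_edges zs"
  by (simp add: cycle_graph_def)

lemma cycle_edges_eq: "zs \<noteq> [] \<Longrightarrow> cycle_edges zs = walk_edges zs \<union> {{last zs, hd zs}}"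
  unfolding cycle_edges_def using walk_edges_append[of zs "[hd zs]"] by simp

lemma cycle_edges_split:
  "cycle_edges (x # A @ y # B) = walk_edges (x # A @ [y]) \<union> walk_edges (y # B @ [x])"
  unfolding cycle_edges_def using walk_edges_split[of "x # A" y "B @ [x]"] by simp

lemma cycle_edges_rotate: "cycle_edges (xs @ ys) = cycle_edges (ys @ xs)"
proof (cases "xs = [] \<or> ys = []")
  case False
  then show ?thesis by (simp add: cycle_edges_eq walk_edges_append insert_commute Un_ac)
qed auto

lemma is_cycle_rotate: "is_cycle E (xs @ ys) \<longleftrightarrow> is_cycle E (ys @ xs)"
  unfolding is_cycle_def using cycle_edges_rotate[of xs ys] by auto

lemma is_cycle_mono: "is_cycle E zs \<Longrightarrow> E \<subseteq> E' \<Longrightarrow> is_cycle E' zs"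
  unfolding is_cycle_def by blast

lemma is_cycle_walk_edges: "is_cycle E zs \<Longrightarrow> walk_edges zs \<subseteq> E"
  unfolding is_cycle_def cycle_edges_def using walk_edges_append_left by blast

lemma is_cycle_verts:
  assumes w: "wf_graph X" and c: "is_cycle (edges X) zs"
  shows "set zs \<subseteq> verts X"
proof -
  have ne: "zs \<noteq> []" and E: "cycle_edges zs \<subseteq> edges X" using c unfolding is_cycle_def by auto
  have "set zs \<subseteq> insert (hd zs) (\<Union> (walk_edges zs))" by (rule set_subset_walk_edges)
  moreover have "walk_edges zs \<subseteq> edges X" "{last zs, hd zs} \<in> edges X"
    using E cycle_edges_eq[OF ne] by auto
  ultimately show ?thesis using wf_graph_edge_subset[OF w] by blast
qed

lemma cycle_edges_edge:
  assumes "distinct zs" "2 \<le> length zs" "e \<in> cycle_edges zs"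
  shows "\<exists>u v. e = {u, v} \<and> u \<noteq> v \<and> u \<in> set zs \<and> v \<in> set zs"
proof -
  have ne: "zs \<noteq> []" using assms(2) by auto
  have "e \<in> walk_edges zs \<or> e = {last zs, hd zs}" using assms(3) cycle_edges_eq[OF ne] by auto
  then show ?thesis
  proof
    assume "e \<in> walk_edges zs"
    then show ?thesis using walk_edges_distinct_edge[OF assms(1)] by blast
  next
    assume e: "e = {last zs, hd zs}"
    obtain a b rest where zs: "zs = a # b # rest" using assms(2)
      by (metis Suc_le_length_iff numeral_2_eq_2)
    have "last zs \<noteq> hd zs" using assms(1) zs by (cases rest rule: rev_cases) auto
    moreover have "last zs \<in> set zs" "hd zs \<in> set zs" using ne by auto
    ultimately show ?thesis using e by blast
  qed
qed

lemma wf_cycle_graph: "distinct zs \<Longrightarrow> 2 \<le> length zs \<Longrightarrow> wf_graph (cycle_graph zs)"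
  unfolding wf_graph_def using cycle_edges_edge by auto

lemma biconn_cycle_graph:
  assumes c: "is_cycle E zs" shows "biconn (cycle_graph zs)"
proof (rule biconnI)
  have d: "distinct zs" and l: "3 \<le> length zs" using c unfolding is_cycle_def by auto
  then have ne: "zs \<noteq> []" by auto
  show "verts (cycle_graph zs) \<noteq> {}" using ne by simp
  have pz: "walk_edges zs \<subseteq> edges (cycle_graph zs)" using cycle_edges_eq[OF ne] by auto
  show "(adj (cycle_graph zs))\<^sup>*\<^sup>* u v"
    if "u \<in> verts (cycle_graph zs)" "v \<in> verts (cycle_graph zs)" for u v
    using rtranclp_adj_walk[OF pz] that by simp
next
  fix w u v assume a: "w \<in> verts (cycle_graph zs)" "u \<in> verts (cycle_graph zs)"
    "v \<in> verts (cycle_graph zs)" "u \<noteq> w" "v \<noteq> w"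
  have d: "distinct zs" using c unfolding is_cycle_def by auto
  obtain p q where pq: "zs = p @ w # q" using split_list[of w zs] a(1) by auto
  let ?ys = "q @ p"
  have "cycle_edges zs = cycle_edges (w # ?ys)" using cycle_edges_rotate[of p "w # q"] pq by simp
  also have "\<dots> = walk_edges (w # ?ys @ [w])" by (simp add: cycle_edges_def)
  finally have "walk_edges ?ys \<subseteq> cycle_edges zs"
    using walk_edges_append_left[of ?ys "[w]"] by (auto simp: walk_edges_Cons)
  moreover have sys: "set ?ys = set zs - {w}" using d pq by auto
  ultimately have "walk_edges ?ys \<subseteq> edges (induced (cycle_graph zs) (verts (cycle_graph zs) - {w}))"
    using walk_edges_subset_set[of _ ?ys] by auto
  moreover have "u \<in> set ?ys" "v \<in> set ?ys" using a sys by auto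
  ultimately show "(adj (induced (cycle_graph zs) (verts (cycle_graph zs) - {w})))\<^sup>*\<^sup>* u v"
    by (rule rtranclp_adj_walk)
qed

lemma cycle_edges_subset_set:
  assumes "e \<in> cycle_edges zs" shows "e \<subseteq> set zs"
proof -
  have "e \<subseteq> set (zs @ [hd zs])" using assms unfolding cycle_edges_def
    by (rule walk_edges_subset_set)
  moreover have "zs \<noteq> []" using assms by (cases zs) (auto simp: cycle_edges_def)
  ultimately show ?thesis by auto
qed

lemma cycle_edges_rotate_n: "cycle_edges (rotate n zs) = cycle_edges zs"
  using cycle_edges_rotate[of "drop (n mod length zs) zs" "take (n mod length zs) zs"]
  by (simp add: rotate_drop_take)

lemma is_cycle_rotate_n: "is_cycle E (rotate n zs) \<longleftrightarrow> is_cycle E zs"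
  unfolding is_cycle_def by (simp add: cycle_edges_rotate_n)

text \<open>The arcs of a cyclic sequence \<open>zs\<close> are the infixes of its rotations.\<close>

lemma cyclic_separation:
  assumes w: "w \<in> set zs" "\<not> P w" and w': "w' \<in> set zs" "\<not> P w'"
    and arcs: "\<And>n ps L ss. rotate n zs = ps @ L @ ss \<Longrightarrow> w \<in> set L \<Longrightarrow> w' \<in> set L \<Longrightarrow>
      \<exists>z\<in>set L. P z"
  obtains n x A y B where "rotate n zs = x # A @ y # B" "P x" "P y" "w \<in> set A" "w' \<in> set B"
proof -
  obtain p q where pq: "zs = p @ w # q" using split_list[OF w(1)] by blast
  define rest where "rest = q @ p"
  have rot_w: "rotate (length p) zs = w # rest" unfolding pq rest_def by (simp add: rotate_append)
  have set_w: "set (w # rest) = set zs" unfolding pq rest_def by auto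
  have rot: "rotate (m + length p) zs = rotate m (w # rest)" for m
    using rot_w rotate_rotate[of m "length p" zs] by simp
  have "\<exists>z\<in>set rest. P z"
    using arcs[of "length p" "[]" "w # rest" "[]"] rot_w set_w w w' by auto
  then obtain R1 y R2 where r: "rest = R1 @ y # R2" "P y" "\<forall>z\<in>set R1. \<not> P z"
    using split_list_first_prop[of rest P] by blast
  have rot_y: "rotate (length (w # R1) + length p) zs = y # R2 @ w # R1"
    unfolding rot r(1) using rotate_append[of "w # R1" "y # R2"] by simp
  have "\<exists>z\<in>set R2. P z"
  proof (rule ccontr)
    assume none: "\<not> (\<exists>z\<in>set R2. P z)"
    have "rotate (length (w # R1) + length p) zs = [y] @ (R2 @ w # R1) @ []" using rot_y by simp
    moreover have "w \<in> set (R2 @ w # R1)" "w' \<in> set (R2 @ w # R1)" using w' r(1,2) set_w by auto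
    ultimately obtain z where "z \<in> set (R2 @ w # R1)" "P z" using arcs by blast
    then show False using none w(2) r(3) by auto
  qed
  then obtain Mid x R4 where r2: "R2 = Mid @ x # R4" "P x" "\<forall>z\<in>set R4. \<not> P z"
    using split_list_last_prop[of R2 P] by blast
  define A where "A = R4 @ w # R1"
  have rot_x: "rotate (length (w # R1 @ y # Mid) + length p) zs = x # A @ y # Mid"
    unfolding rot r(1) r2(1) A_def using rotate_append[of "w # R1 @ y # Mid" "x # R4"] by simp
  have "w' \<in> set Mid"
  proof (rule ccontr)
    assume "w' \<notin> set Mid"
    then have "w' \<in> set A" using w' r r2 set_w unfolding A_def by auto
    moreover have "w \<in> set A" unfolding A_def by simp
    moreover have "rotate (length (w # R1 @ y # Mid) + length p) zs = [x] @ A @ (y # Mid)"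
      using rot_x by simp
    ultimately obtain z where "z \<in> set A" "P z" using arcs by blast
    then show False using w(2) r(3) r2(3) unfolding A_def by auto
  qed
  then show ?thesis using that[OF rot_x r2(2) r(2)] unfolding A_def by simp
qed

lemma ex_block_containing_cycle:
  assumes w: "wf_graph X" and c: "is_cycle (edges X) zs"
  obtains B where "is_block X B" "cycle_edges zs \<subseteq> edges B"
proof -
  have "distinct zs" "2 \<le> length zs" using c unfolding is_cycle_def by auto
  then have "wf_graph (cycle_graph zs)" by (rule wf_cycle_graph)
  then have "subgraph (cycle_graph zs) X"
    using is_cycle_verts[OF w c] c unfolding subgraph_def is_cycle_def by auto
  then obtain B where "is_block X B" "subgraph (cycle_graph zs) B"
    using ex_block_containing[OF w _ biconn_cycle_graph[OF c]] by blast
  then show ?thesis using that unfolding subgraph_def by simp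
qed

lemma has_cycleI:
  assumes c: "is_cycle (edges T) vs" and V: "set vs \<subseteq> verts T"
  shows "has_cycle T"
  unfolding has_cycle_def
proof (intro exI conjI allI impI)
  show "distinct vs" "3 \<le> length vs" using c unfolding is_cycle_def by auto
  show "set vs \<subseteq> verts T" by (rule V)
  fix i assume i: "i < length vs"
  have ne: "vs \<noteq> []" using i by auto
  have E: "walk_edges vs \<subseteq> edges T" "{last vs, hd vs} \<in> edges T"
    using c cycle_edges_eq[OF ne] unfolding is_cycle_def by auto
  show "{vs ! i, vs ! (Suc i mod length vs)} \<in> edges T"
  proof (cases "Suc i < length vs")
    case True
    then show ?thesis using walk_edges_nth[OF E(1)] by simp
  next
    case False
    then have "i = length vs - 1" using i by simp
    then show ?thesis using E(2) ne by (simp add: last_conv_nth hd_conv_nth)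
  qed
qed

lemma has_cycleI_detour:
  assumes E: "\<And>e. e \<in> edges T \<Longrightarrow> e \<subseteq> verts T"
    and pa: "{p, a} \<in> edges T" and pb: "{p, b} \<in> edges T"
    and ab: "a \<noteq> b" "a \<noteq> p" "b \<noteq> p"
    and conn: "(adj (induced T (verts T - {p})))\<^sup>*\<^sup>* a b"
  shows "has_cycle T"
proof -
  obtain ys where ys: "ys \<noteq> []" "hd ys = a" "last ys = b" "distinct ys"
    "walk_edges ys \<subseteq> edges (induced T (verts T - {p}))"
    using rtranclp_adj_path_exists[OF conn] by blast
  have sys: "set ys \<subseteq> verts T - {p}"
    using walk_set_subset[OF ys(5)] ys(2) ab(2) E[OF pa] by auto
  have "length ys \<noteq> 1" using ys(1-3) ab(1) by (cases ys) auto
  then have "3 \<le> length (p # ys)" using ys(1) by (cases ys) (auto simp: Suc_le_eq)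
  moreover have "cycle_edges (p # ys) = insert {p, a} (walk_edges ys) \<union> {{b, p}}"
    using cycle_edges_eq[of "p # ys"] ys(1-3) by (simp add: walk_edges_Cons)
  ultimately have "is_cycle (edges T) (p # ys)"
    unfolding is_cycle_def using ys(4,5) sys pa pb by (auto simp: insert_commute)
  moreover have "set (p # ys) \<subseteq> verts T" using sys E[OF pa] by auto
  ultimately show ?thesis by (rule has_cycleI)
qed

lemma no_cycle_path_separates:
  assumes E: "\<And>e. e \<in> edges T \<Longrightarrow> e \<subseteq> verts T" and acyclic: "\<not> has_cycle T"
    and path: "walk_edges (a # p # ys) \<subseteq> edges T" "distinct (a # p # ys)" and b: "b \<in> set ys"
  shows "\<not> (adj (induced T (verts T - {p})))\<^sup>*\<^sup>* a b"
proof
  let ?K = "verts T - {p}"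
  assume ab: "(adj (induced T ?K))\<^sup>*\<^sup>* a b"
  have ne: "ys \<noteq> []" using b by auto
  have "walk_edges ys \<subseteq> edges (induced T ?K)"
  proof
    fix e assume e: "e \<in> walk_edges ys"
    then have "e \<in> edges T" using path(1) walk_edges_append_right[of ys "[a, p]"] by auto
    then show "e \<in> edges (induced T ?K)"
      using walk_edges_subset_set[OF e] E path(2) by auto
  qed
  then have "(adj (induced T ?K))\<^sup>*\<^sup>* (hd ys) b" using b by (rule rtranclp_adj_hd_walk)
  then have "(adj (induced T ?K))\<^sup>*\<^sup>* a (hd ys)"
    using ab by (meson rtranclp_adj_sym rtranclp_trans)
  moreover have "{p, a} \<in> edges T" "{p, hd ys} \<in> edges T"
    using path(1) ne by (auto simp: walk_edges_Cons insert_commute)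
  moreover have "a \<noteq> hd ys" "a \<noteq> p" "hd ys \<noteq> p" using path(2) ne by (cases ys; auto)+
  ultimately show False using has_cycleI_detour[OF E] acyclic by blast
qed

section \<open>Ears of biconnected graphs\<close>

text \<open>Closing a path \<open>u L v\<close> through a biconnected subgraph \<open>M\<close> whose interior avoids \<open>M\<close>
  by a path of \<open>M\<close> from \<open>v\<close> back to \<open>u\<close>.\<close>

lemma ear_cycle:
  assumes wM: "wf_graph M" and bM: "biconn M" and MF: "edges M \<subseteq> edges F"
    and uv: "u \<noteq> v" "u \<in> verts M" "v \<in> verts M"
    and L: "distinct L" "set L \<inter> verts M = {}" "walk_edges (u # L @ [v]) \<subseteq> edges F"
    and new: "{u, hd (L @ [v])} \<notin> edges M"
  obtains zs where "is_cycle (edges F) zs" "u \<in> set zs" "v \<in> set zs"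
    "cycle_edges zs \<inter> edges M \<noteq> {}" "\<not> cycle_edges zs \<subseteq> edges M"
proof -
  obtain Q where Q: "Q \<noteq> []" "hd Q = v" "last Q = u" "walk_edges Q \<subseteq> edges M" "distinct Q"
    using rtranclp_adj_path_exists[OF biconn_rtranclp_adj[OF bM uv(3,2)]] by blast
  have QM: "set Q \<subseteq> verts M"
    using walk_set_subset[OF Q(4)] Q(2) uv(3) wf_graph_edge_subset[OF wM] by blast
  obtain Q' where Q': "Q = v # Q'" using Q(1,2) by (cases Q) auto
  define J where "J = butlast Q"
  have QJ: "Q = J @ [u]" using append_butlast_last_id[OF Q(1)] Q(3) unfolding J_def by simp
  have J: "J \<noteq> []" "hd J = v" using QJ Q' uv(1) by (cases J; auto)+
  define zs where "zs = u # L @ J"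
  have edges_zs: "cycle_edges zs = walk_edges (u # L @ [v]) \<union> walk_edges Q"
  proof -
    have "cycle_edges zs = walk_edges ((u # L) @ v # Q')"
      unfolding zs_def cycle_edges_def using QJ Q' by simp
    then show ?thesis using walk_edges_split[of "u # L" v Q'] Q' by simp
  qed
  have "Q' \<noteq> []" using Q' Q(3) uv(1) by auto
  then have Q_edge: "{v, hd Q'} \<in> walk_edges Q" using Q' by (cases Q') auto
  have "3 \<le> length zs"
  proof (cases L)
    case Nil
    have "J \<noteq> [v]" using Q_edge Q(4) QJ new Nil by (auto simp: insert_commute)
    then show ?thesis using J Nil unfolding zs_def by (cases J; cases "tl J") auto
  next
    case Cons
    then show ?thesis using J unfolding zs_def by (cases J) auto
  qed
  moreover have "distinct zs" unfolding zs_def using L(1,2) Q(5) QJ QM uv(2) by auto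
  moreover have "cycle_edges zs \<subseteq> edges F" using edges_zs L(3) Q(4) MF by auto
  ultimately have "is_cycle (edges F) zs" unfolding is_cycle_def by blast
  moreover have "u \<in> set zs" "v \<in> set zs" unfolding zs_def using J by (auto intro: hd_in_set)
  moreover have "cycle_edges zs \<inter> edges M \<noteq> {}" using edges_zs Q_edge Q(4) by blast
  moreover have "{u, hd (L @ [v])} \<in> cycle_edges zs" using edges_zs by (cases L) auto
  ultimately show ?thesis using that new by blast
qed

text \<open>A vertex outside a subgraph \<open>M\<close> of a biconnected graph reaches, through vertices outside
  \<open>M\<close>, two distinct vertices of \<open>M\<close>; otherwise a single vertex would cut it off from \<open>M\<close>.\<close>

lemma biconn_two_attachments:
  assumes wF: "wf_graph F" and bF: "biconn F" and MF: "verts M \<subseteq> verts F"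
    and m: "m1 \<noteq> m2" "m1 \<in> verts M" "m2 \<in> verts M"
    and c: "c \<in> verts F" "c \<notin> verts M"
  obtains u v r1 r2 where "u \<noteq> v" "u \<in> verts M" "v \<in> verts M" "adj F r1 u" "adj F r2 v"
    "r1 \<in> verts F - verts M" "(adj (induced F (verts F - verts M)))\<^sup>*\<^sup>* r1 r2"
proof -
  define Out where "Out = verts F - verts M"
  define Reach where "Reach x \<longleftrightarrow> (adj (induced F Out))\<^sup>*\<^sup>* c x" for x
  define Att where "Att = {v \<in> verts M. \<exists>r. Reach r \<and> adj F r v}"
  have cO: "c \<in> Out" using c unfolding Out_def by simp
  have RO: "Reach x \<Longrightarrow> x \<in> Out" for x
    unfolding Reach_def using rtranclp_adj_induced_in cO by metis
  have closure: "x \<in> Out"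
    if conn: "(adj (induced F (verts F - Z)))\<^sup>*\<^sup>* c x" and ZA: "Att \<subseteq> Z" for x Z
  proof -
    have "x \<in> Out \<and> Reach x" using conn
    proof (induction rule: rtranclp_induct)
      case base then show ?case using cO unfolding Reach_def by simp
    next
      case (step x y)
      have xy: "adj F x y" "y \<notin> Z" using step(2) by auto
      have yF: "y \<in> verts F" using wf_graph_adjD[OF wF xy(1)] by blast
      show ?case
      proof (cases "y \<in> Out")
        case True
        have "adj (induced F Out) x y" using xy(1) True step(3) by simp
        then have "Reach y" using step(3) unfolding Reach_def
          by (meson rtranclp.rtrancl_into_rtrancl)
        then show ?thesis using True by simp
      next
        case False
        then have "y \<in> Att" using yF step(3) xy(1) unfolding Att_def Out_def by blast
        then show ?thesis using ZA xy(2) by blast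
      qed
    qed
    then show ?thesis by blast
  qed
  have "\<exists>u v. u \<in> Att \<and> v \<in> Att \<and> u \<noteq> v"
  proof (rule ccontr)
    assume "\<not> ?thesis"
    then obtain w where w: "Att \<subseteq> {w}" "w \<in> verts M"
      using m(2) unfolding Att_def by (cases "Att = {}") blast+
    obtain x where x: "x \<in> verts M" "x \<noteq> w" using m by blast
    have "(adj (induced F (verts F - {w})))\<^sup>*\<^sup>* c x"
      using biconn_avoid[OF wF bF c(1), of x w] x MF c(2) w(2) by blast
    then have "x \<in> Out" using closure w(1) by blast
    then show False using x unfolding Out_def by simp
  qed
  then obtain u v r1 r2 where uv: "u \<noteq> v" "u \<in> verts M" "v \<in> verts M"
    and r: "Reach r1" "Reach r2" "adj F r1 u" "adj F r2 v"
    unfolding Att_def by blast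
  have "(adj (induced F Out))\<^sup>*\<^sup>* r1 r2" using r(1,2) unfolding Reach_def
    by (rule rtranclp_adj_trans_sym)
  then show ?thesis using that uv r(3,4) RO[OF r(1)] unfolding Out_def by blast
qed

lemma biconn_ear:
  assumes wF: "wf_graph F" and bF: "biconn F" and sM: "subgraph M F" and bM: "biconn M"
    and m: "m1 \<noteq> m2" "m1 \<in> verts M" "m2 \<in> verts M"
    and f: "f \<in> edges F" "f \<notin> edges M"
  obtains zs u v where "is_cycle (edges F) zs" "u \<noteq> v" "u \<in> verts M" "v \<in> verts M"
    "u \<in> set zs" "v \<in> set zs" "cycle_edges zs \<inter> edges M \<noteq> {}" "\<not> cycle_edges zs \<subseteq> edges M"
proof -
  have wM: "wf_graph M" using sM subgraph_wf by blast
  have MF: "verts M \<subseteq> verts F" "edges M \<subseteq> edges F" using sM unfolding subgraph_def by auto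
  obtain a b where ab: "f = {a, b}" "a \<noteq> b" "a \<in> verts F" "b \<in> verts F"
    using wf_graph_edgeE[OF wF f(1)] by metis
  show ?thesis
  proof (cases "a \<in> verts M \<and> b \<in> verts M")
    case True
    have "walk_edges [a, b] \<subseteq> edges F" "{a, hd ([] @ [b])} \<notin> edges M" using f ab by auto
    then obtain zs where "is_cycle (edges F) zs" "a \<in> set zs" "b \<in> set zs"
      "cycle_edges zs \<inter> edges M \<noteq> {}" "\<not> cycle_edges zs \<subseteq> edges M"
      using ear_cycle[OF wM bM MF(2) ab(2), of "[]"] True by auto
    then show ?thesis using that ab(2) True by blast
  next
    case False
    then obtain c where "c \<in> verts F" "c \<notin> verts M" using ab by blast
    then obtain u v r1 r2 where uv: "u \<noteq> v" "u \<in> verts M" "v \<in> verts M"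
      and r: "adj F r1 u" "adj F r2 v" "r1 \<in> verts F - verts M"
      and conn: "(adj (induced F (verts F - verts M)))\<^sup>*\<^sup>* r1 r2"
      using biconn_two_attachments[OF wF bF MF(1) m] by blast
    obtain L where L: "L \<noteq> []" "hd L = r1" "last L = r2" "distinct L"
      "walk_edges L \<subseteq> edges (induced F (verts F - verts M))"
      using rtranclp_adj_path_exists[OF conn] by blast
    have "set L \<subseteq> verts F - verts M"
      using walk_set_subset[OF L(5)] L(2) r(3) by auto
    moreover have "walk_edges (u # L @ [v]) \<subseteq> edges F"
      using L r walk_edges_append[OF L(1), of "[v]"]
      by (auto simp: walk_edges_Cons adj_def insert_commute)
    moreover have "{u, hd (L @ [v])} \<notin> edges M"
      using L(1,2) r(3) wf_graph_edge_subset[OF wM] by auto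
    ultimately obtain zs where "is_cycle (edges F) zs" "u \<in> set zs" "v \<in> set zs"
      "cycle_edges zs \<inter> edges M \<noteq> {}" "\<not> cycle_edges zs \<subseteq> edges M"
      using ear_cycle[OF wM bM MF(2) uv L(4)] by blast
    then show ?thesis using that uv by blast
  qed
qed

text \<open>A maximal biconnected subgraph all of whose edges have the property absorbs every ear.\<close>

lemma biconn_edges_closed_under_cycles:
  assumes wF: "wf_graph F" and bF: "biconn F" and e1: "e1 \<in> edges F" "P e1"
    and cycles: "\<And>zs. is_cycle (edges F) zs \<Longrightarrow> \<exists>e\<in>cycle_edges zs. P e \<Longrightarrow>
      \<forall>e\<in>cycle_edges zs. P e"
    and e2: "e2 \<in> edges F"
  shows "P e2"
proof -
  obtain u1 v1 where uv1: "e1 = {u1, v1}" "u1 \<noteq> v1" using wf_graph_edgeE[OF wF e1(1)] by metis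
  define admissible where
    "admissible M \<longleftrightarrow> subgraph M F \<and> biconn M \<and> e1 \<in> edges M \<and> (\<forall>f\<in>edges M. P f)"
    for M
  have "admissible (edge_graph u1 v1)" unfolding admissible_def
    using subgraph_edge_graph[OF wF _ uv1(2)] e1 uv1 biconn_edge_graph[OF uv1(2)] by auto
  then obtain M where M: "admissible M" and max: "\<And>M'. admissible M' \<Longrightarrow> subgraph M M' \<Longrightarrow> M' = M"
    using exists_maximal_subgraph[of F admissible, OF wF] unfolding admissible_def by blast
  have sM: "subgraph M F" and bM: "biconn M" and e1M: "e1 \<in> edges M" and PM: "\<forall>f\<in>edges M. P f"
    using M unfolding admissible_def by auto
  have wM: "wf_graph M" using sM subgraph_wf by blast
  have uvM: "u1 \<in> verts M" "v1 \<in> verts M" using wf_graph_edge_subset[OF wM e1M] uv1(1) by auto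
  have "edges F \<subseteq> edges M"
  proof (rule ccontr)
    assume "\<not> edges F \<subseteq> edges M"
    then obtain f where f: "f \<in> edges F" "f \<notin> edges M" by blast
    obtain zs u v where z: "is_cycle (edges F) zs" "u \<noteq> v" "u \<in> verts M" "v \<in> verts M"
      "u \<in> set zs" "v \<in> set zs" "cycle_edges zs \<inter> edges M \<noteq> {}" "\<not> cycle_edges zs \<subseteq> edges M"
      using biconn_ear[OF wF bF sM bM uv1(2) uvM f] by blast
    have dz: "distinct zs" "2 \<le> length zs" using z(1) unfolding is_cycle_def by auto
    let ?M' = "gunion M (cycle_graph zs)"
    have "admissible ?M'" unfolding admissible_def
    proof (intro conjI)
      have "subgraph (cycle_graph zs) F"
        using wf_cycle_graph[OF dz] is_cycle_verts[OF wF z(1)] z(1)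
        unfolding subgraph_def is_cycle_def by simp
      then show "subgraph ?M' F" by (rule subgraph_gunion[OF sM])
      show "biconn ?M'"
        using biconn_gunion[OF wM wf_cycle_graph[OF dz] bM biconn_cycle_graph[OF z(1)] z(2,3)] z(4-6)
        by simp
      show "e1 \<in> edges ?M'" using e1M by simp
      show "\<forall>f\<in>edges ?M'. P f" using PM cycles[OF z(1)] z(7) by auto
    qed
    moreover have "subgraph M ?M'" using subgraph_gunion_left[OF wM wf_cycle_graph[OF dz]] .
    ultimately have "?M' = M" using max by blast
    then have "cycle_edges zs \<subseteq> edges M" by (metis edges_cycle_graph edges_gunion Un_upper2)
    then show False using z(8) by blast
  qed
  then show ?thesis using PM e2 by blast
qed

section \<open>Boundaried sums with an acyclic auxiliary graph\<close>

lemma component_eq_if_adj: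
  assumes "adj X a b"
  shows "{u \<in> V. (adj X)\<^sup>*\<^sup>* a u} = {u \<in> V. (adj X)\<^sup>*\<^sup>* b u}"
proof -
  have ab: "(adj X)\<^sup>*\<^sup>* a b" using assms by simp
  have ba: "(adj X)\<^sup>*\<^sup>* b a" using assms adj_commute by (metis r_into_rtranclp)
  show ?thesis using rtranclp_trans[OF ab] rtranclp_trans[OF ba] by blast
qed

locale boundaried_sum =
  fixes G H :: "'v graph" and S :: "'v set"
  assumes wf_G: "wf_graph G" and wf_H: "wf_graph H"
    and S_G: "S \<subseteq> verts G" and S_H: "S \<subseteq> verts H"
    and disjoint: "(verts G - S) \<inter> (verts H - S) = {}"
    and induced_eq: "induced G S = induced H S"
    and aux_acyclic: "\<not> has_cycle (aux_sum G H S)"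
begin

abbreviation "GH \<equiv> gunion G H"
abbreviation "Aux \<equiv> aux_sum G H S"

lemma wf_GH: "wf_graph GH"
  using wf_graph_gunion[OF wf_G wf_H] .

lemma common_vert_in_S: "v \<in> verts G \<Longrightarrow> v \<in> verts H \<Longrightarrow> v \<in> S"
  using disjoint by blast

lemma boundary_edges_eq: "{e \<in> edges G. e \<subseteq> S} = {e \<in> edges H. e \<subseteq> S}"
  using arg_cong[OF induced_eq, of edges] by simp

lemma boundary_edge_H: "e \<in> edges G \<Longrightarrow> e \<subseteq> S \<Longrightarrow> e \<in> edges H"
  using boundary_edges_eq by blast

lemma boundary_edge_G: "e \<in> edges H \<Longrightarrow> e \<subseteq> S \<Longrightarrow> e \<in> edges G"
  using boundary_edges_eq by blast

lemma edge_GH_in_G: assumes "e \<in> edges GH" "e \<subseteq> verts G" shows "e \<in> edges G"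
proof -
  have "e \<in> edges G \<or> e \<in> edges H" using assms(1) by simp
  then show ?thesis
  proof
    assume h: "e \<in> edges H"
    then have "e \<subseteq> verts H" using wf_graph_edge_subset[OF wf_H] by blast
    then have "e \<subseteq> S" using assms(2) common_vert_in_S by blast
    then show ?thesis using boundary_edge_G[OF h] by blast
  qed
qed

lemma edge_GH_in_H: assumes "e \<in> edges GH" "e \<subseteq> verts H" shows "e \<in> edges H"
proof -
  have "e \<in> edges G \<or> e \<in> edges H" using assms(1) by simp
  then show ?thesis
  proof
    assume h: "e \<in> edges G"
    then have "e \<subseteq> verts G" using wf_graph_edge_subset[OF wf_G] by blast
    then have "e \<subseteq> S" using assms(2) common_vert_in_S by blast
    then show ?thesis using boundary_edge_H[OF h] by blast
  qed
qed

definition part_block :: "'v graph \<Rightarrow> bool" where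
  "part_block P \<longleftrightarrow> is_block G P \<or> is_block H P"

definition block_linked :: "'v set \<Rightarrow> 'v set \<Rightarrow> bool" where
  "block_linked e e' \<longleftrightarrow> (\<exists>P. part_block P \<and> e \<in> edges P \<and> e' \<in> edges P)"

definition linked_edges :: "'v set set \<Rightarrow> bool" where
  "linked_edges E \<longleftrightarrow> (\<forall>e\<in>E. \<forall>e'\<in>E. block_linked\<^sup>*\<^sup>* e e')"

lemma linked_edges_Un:
  assumes "linked_edges E1" "linked_edges E2" "E1 \<inter> E2 \<noteq> {}"
  shows "linked_edges (E1 \<union> E2)"
proof -
  obtain e0 where "e0 \<in> E1" "e0 \<in> E2" using assms(3) by blast
  then have "block_linked\<^sup>*\<^sup>* e e0 \<and> block_linked\<^sup>*\<^sup>* e0 e" if "e \<in> E1 \<union> E2" for e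
    using that assms(1,2) unfolding linked_edges_def by blast
  then show ?thesis unfolding linked_edges_def by (meson rtranclp_trans)
qed

lemma linked_edges_subset: "linked_edges E' \<Longrightarrow> E \<subseteq> E' \<Longrightarrow> linked_edges E"
  unfolding linked_edges_def by blast

lemma linked_edges_block: "part_block P \<Longrightarrow> linked_edges (edges P)"
  unfolding linked_edges_def block_linked_def by blast

lemma linked_cycle_in_G:
  assumes c: "is_cycle (edges GH) zs" and sG: "set zs \<subseteq> verts G"
  shows "linked_edges (cycle_edges zs)"
proof -
  have "cycle_edges zs \<subseteq> edges G"
    using edge_GH_in_G c cycle_edges_subset_set sG unfolding is_cycle_def by blast
  then have "is_cycle (edges G) zs" using c unfolding is_cycle_def by blast
  then obtain P where "is_block G P" "cycle_edges zs \<subseteq> edges P"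
    using ex_block_containing_cycle[OF wf_G] by blast
  then show ?thesis using linked_edges_block linked_edges_subset unfolding part_block_def by blast
qed

lemma linked_cycle_in_H:
  assumes c: "is_cycle (edges GH) zs" and sH: "set zs \<subseteq> verts H"
  shows "linked_edges (cycle_edges zs)"
proof -
  have "cycle_edges zs \<subseteq> edges H"
    using edge_GH_in_H c cycle_edges_subset_set sH unfolding is_cycle_def by blast
  then have "is_cycle (edges H) zs" using c unfolding is_cycle_def by blast
  then obtain P where "is_block H P" "cycle_edges zs \<subseteq> edges P"
    using ex_block_containing_cycle[OF wf_H] by blast
  then show ?thesis using linked_edges_block linked_edges_subset unfolding part_block_def by blast
qed

definition comp_G :: "'v \<Rightarrow> 'v set" where
  "comp_G v = {u \<in> verts G. (adj G)\<^sup>*\<^sup>* v u}"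

definition comp_H :: "'v \<Rightarrow> 'v set" where
  "comp_H v = {u \<in> verts H. (adj H)\<^sup>*\<^sup>* v u}"

definition comp_S :: "'v \<Rightarrow> 'v set" where
  "comp_S v = {u \<in> verts (induced G S). (adj (induced G S))\<^sup>*\<^sup>* v u}"

definition aux_node :: "'v \<Rightarrow> 'v auxv" where
  "aux_node v =
    (if v \<in> S then SC (comp_S v) else if v \<in> verts G then GC (comp_G v) else HC (comp_H v))"

lemma verts_Aux:
  "verts Aux = GC ` comps G \<union> SC ` comps (induced G S) \<union> (HC ` comps H \<union> SC ` comps (induced H S))"
  unfolding aux_sum_def aux_def by simp

lemma edges_Aux:
  "edges Aux = {{GC C, SC D} | C D. C \<in> comps G \<and> D \<in> comps (induced G S) \<and> D \<subseteq> C}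
    \<union> {{HC C, SC D} | C D. C \<in> comps H \<and> D \<in> comps (induced H S) \<and> D \<subseteq> C}"
  unfolding aux_sum_def aux_def by simp

lemma Aux_edge_subset: "e \<in> edges Aux \<Longrightarrow> e \<subseteq> verts Aux"
  unfolding edges_Aux verts_Aux by auto

lemma Aux_edgeE:
  assumes "e \<in> edges Aux"
  obtains C D where "e = {GC C, SC D}" | C D where "e = {HC C, SC D}"
  using assms unfolding edges_Aux by blast

lemma comp_G_in_comps: "v \<in> verts G \<Longrightarrow> comp_G v \<in> comps G"
  unfolding comp_G_def comps_def by blast

lemma comp_H_in_comps: "v \<in> verts H \<Longrightarrow> comp_H v \<in> comps H"
  unfolding comp_H_def comps_def by blast

lemma comp_S_in_comps: "v \<in> S \<Longrightarrow> comp_S v \<in> comps (induced G S)"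
  unfolding comp_S_def comps_def using S_G by auto

lemma comp_S_subset_comp_G: "comp_S v \<subseteq> comp_G v"
  unfolding comp_S_def comp_G_def using rtranclp_adj_mono[of "induced G S" G] by auto

lemma comp_S_subset_comp_H: "comp_S v \<subseteq> comp_H v"
  unfolding comp_S_def comp_H_def induced_eq using rtranclp_adj_mono[of "induced H S" H] by auto

lemma Aux_edge_G: assumes "v \<in> S" shows "{GC (comp_G v), SC (comp_S v)} \<in> edges Aux"
proof -
  have "comp_G v \<in> comps G" "comp_S v \<in> comps (induced G S)"
    using assms S_G comp_G_in_comps comp_S_in_comps by blast+
  then have "{GC (comp_G v), SC (comp_S v)} \<in>
      {{GC C, SC D} | C D. C \<in> comps G \<and> D \<in> comps (induced G S) \<and> D \<subseteq> C}"
    using comp_S_subset_comp_G by blast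
  then show ?thesis unfolding edges_Aux by (rule UnI1)
qed

lemma Aux_edge_H: assumes "v \<in> S" shows "{HC (comp_H v), SC (comp_S v)} \<in> edges Aux"
proof -
  have "comp_H v \<in> comps H" "comp_S v \<in> comps (induced H S)"
    using assms S_H comp_H_in_comps comp_S_in_comps induced_eq by force+
  then have "{HC (comp_H v), SC (comp_S v)} \<in>
      {{HC C, SC D} | C D. C \<in> comps H \<and> D \<in> comps (induced H S) \<and> D \<subseteq> C}"
    using comp_S_subset_comp_H by blast
  then show ?thesis unfolding edges_Aux by (rule UnI2)
qed

lemma aux_node_S: "v \<in> S \<Longrightarrow> aux_node v = SC (comp_S v)"
  unfolding aux_node_def by simp

lemma aux_node_G: "v \<in> verts G \<Longrightarrow> v \<notin> S \<Longrightarrow> aux_node v = GC (comp_G v)"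
  unfolding aux_node_def by simp

lemma aux_node_H: "v \<in> verts H \<Longrightarrow> v \<notin> S \<Longrightarrow> aux_node v = HC (comp_H v)"
  unfolding aux_node_def using common_vert_in_S by auto

lemma aux_node_SC: "aux_node v = SC D \<Longrightarrow> v \<in> S \<and> D = comp_S v"
  unfolding aux_node_def by (auto split: if_splits)

lemma aux_node_in_verts: assumes "v \<in> verts GH" shows "aux_node v \<in> verts Aux"
proof (cases "v \<in> S")
  case True then show ?thesis unfolding aux_node_def verts_Aux using comp_S_in_comps by auto
next
  case False
  then show ?thesis
    using assms comp_G_in_comps comp_H_in_comps unfolding aux_node_def verts_Aux by auto
qed

lemma aux_node_edge_G:
  assumes e: "{a, b} \<in> edges G"
  shows "aux_node a = aux_node b \<or> {aux_node a, aux_node b} \<in> edges Aux"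
proof -
  have ab: "a \<in> verts G" "b \<in> verts G" using wf_graph_edge_subset[OF wf_G e] by auto
  have G: "comp_G a = comp_G b" unfolding comp_G_def using e
    by (intro component_eq_if_adj) (simp add: adj_def)
  consider "a \<in> S" "b \<in> S" | "a \<in> S" "b \<notin> S" | "a \<notin> S" "b \<in> S" | "a \<notin> S" "b \<notin> S" by blast
  then show ?thesis
  proof cases
    case 1
    then have "comp_S a = comp_S b"
      unfolding comp_S_def using e by (intro component_eq_if_adj) (simp add: adj_def)
    then show ?thesis using 1 by (simp add: aux_node_S)
  next
    case 2
    then show ?thesis using Aux_edge_G[of a] ab G
      by (simp add: aux_node_S aux_node_G insert_commute)
  next
    case 3
    then show ?thesis using Aux_edge_G[of b] ab G by (simp add: aux_node_S aux_node_G)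
  next
    case 4
    then show ?thesis using ab G by (simp add: aux_node_G)
  qed
qed

lemma aux_node_edge_H:
  assumes e: "{a, b} \<in> edges H"
  shows "aux_node a = aux_node b \<or> {aux_node a, aux_node b} \<in> edges Aux"
proof -
  have ab: "a \<in> verts H" "b \<in> verts H" using wf_graph_edge_subset[OF wf_H e] by auto
  have H: "comp_H a = comp_H b" unfolding comp_H_def using e
    by (intro component_eq_if_adj) (simp add: adj_def)
  consider "a \<in> S" "b \<in> S" | "a \<in> S" "b \<notin> S" | "a \<notin> S" "b \<in> S" | "a \<notin> S" "b \<notin> S" by blast
  then show ?thesis
  proof cases
    case 1
    then show ?thesis using boundary_edge_G[OF e] aux_node_edge_G by simp
  next
    case 2
    then show ?thesis using Aux_edge_H[of a] ab H
      by (simp add: aux_node_S aux_node_H insert_commute)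
  next
    case 3
    then show ?thesis using Aux_edge_H[of b] ab H by (simp add: aux_node_S aux_node_H)
  next
    case 4
    then show ?thesis using ab H by (simp add: aux_node_H)
  qed
qed

lemma aux_node_edge:
  "{a, b} \<in> edges GH \<Longrightarrow> aux_node a = aux_node b \<or> {aux_node a, aux_node b} \<in> edges Aux"
  using aux_node_edge_G aux_node_edge_H by auto


lemma rtranclp_aux_node_walk:
  "walk_edges L \<subseteq> edges GH \<Longrightarrow> \<forall>x\<in>set L. aux_node x \<in> K \<Longrightarrow> x \<in> set L \<Longrightarrow>
    (adj (induced Aux K))\<^sup>*\<^sup>* (aux_node (hd L)) (aux_node x)"
proof (induction L rule: walk_edges.induct)
  case (1 a b ys)
  have "aux_node a = aux_node b \<or> {aux_node a, aux_node b} \<in> edges Aux"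
    using 1(2) by (intro aux_node_edge) simp
  moreover have "aux_node a \<in> K" "aux_node b \<in> K" using 1(3) by auto
  ultimately have ab: "(adj (induced Aux K))\<^sup>*\<^sup>* (aux_node a) (aux_node b)" by (auto simp: adj_def)
  show ?case
  proof (cases "x = a")
    case False
    have "(adj (induced Aux K))\<^sup>*\<^sup>* (aux_node (hd (b # ys))) (aux_node x)"
      by (rule 1(1)) (use 1(2-4) False in auto)
    then show ?thesis using ab by (simp del: adj_induced add: rtranclp_trans)
  qed simp
qed auto

lemma aux_walk_avoiding:
  assumes "walk_edges L \<subseteq> edges GH" "set L \<subseteq> verts GH" "\<forall>x\<in>set L. aux_node x \<noteq> P"
    and "a \<in> set L" "b \<in> set L"
  shows "(adj (induced Aux (verts Aux - {P})))\<^sup>*\<^sup>* (aux_node a) (aux_node b)"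
proof -
  have "\<forall>x\<in>set L. aux_node x \<in> verts Aux - {P}" using assms(2,3) aux_node_in_verts by blast
  then show ?thesis using rtranclp_aux_node_walk[OF assms(1)] assms(4,5)
    by (blast intro: rtranclp_adj_trans_sym)
qed

text \<open>The auxiliary graph is a forest in which every edge joins a component of \<open>G\<close> or \<open>H\<close> to
  a component of \<open>G[S]\<close>, so a component of \<open>G\<close> and a component of \<open>H\<close> are separated by a
  single component of \<open>G[S]\<close>.\<close>

lemma Aux_separator:
  assumes "(adj Aux)\<^sup>*\<^sup>* (GC C) (HC C')"
  obtains D where "\<not> (adj (induced Aux (verts Aux - {SC D})))\<^sup>*\<^sup>* (GC C) (HC C')"
proof -
  obtain xs where xs: "xs \<noteq> []" "hd xs = GC C" "last xs = HC C'" "walk_edges xs \<subseteq> edges Aux"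
    "distinct xs"
    using rtranclp_adj_path_exists[OF assms] by blast
  obtain p ys where xs_eq: "xs = GC C # p # ys" using xs(1-3) by (cases xs; cases "tl xs") auto
  have "{GC C, p} \<in> edges Aux" using xs(4) xs_eq by simp
  then obtain D where p: "p = SC D"
    by (rule Aux_edgeE) (auto simp: doubleton_eq_iff)
  have "HC C' \<in> set ys" using xs(3) xs_eq p by (cases ys rule: rev_cases) auto
  then show ?thesis
    using no_cycle_path_separates[OF Aux_edge_subset aux_acyclic, of "GC C" p ys "HC C'"]
      xs(4,5) xs_eq p that by blast
qed

lemma cycle_crosses_boundary_component:
  assumes c: "is_cycle (edges GH) zs" and w: "w \<in> set zs" "w \<in> verts G" "w \<notin> S"
    and w': "w' \<in> set zs" "w' \<notin> verts G"
  obtains n x A y B where "rotate n zs = x # A @ y # B" "x \<in> S" "y \<in> S"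
    "(adj (induced G S))\<^sup>*\<^sup>* x y" "\<exists>a\<in>set A. a \<notin> S" "\<exists>b\<in>set B. b \<notin> S"
proof -
  have sZ: "set zs \<subseteq> verts GH" using is_cycle_verts[OF wf_GH c] .
  have w'H: "w' \<in> verts H" "w' \<notin> S" using w' sZ S_G by auto
  have nw: "aux_node w = GC (comp_G w)" using w by (simp add: aux_node_G)
  have nw': "aux_node w' = HC (comp_H w')" using w'H by (simp add: aux_node_H)
  have "(adj (induced Aux (verts Aux)))\<^sup>*\<^sup>* (aux_node w) (aux_node w')"
    using rtranclp_aux_node_walk[OF is_cycle_walk_edges[OF c]] w(1) w'(1) aux_node_in_verts sZ
    by (blast intro: rtranclp_adj_trans_sym)
  then have "(adj Aux)\<^sup>*\<^sup>* (GC (comp_G w)) (HC (comp_H w'))"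
    using nw nw' by (auto elim: rtranclp_adj_mono[rotated])
  then obtain D
    where sep: "\<not> (adj (induced Aux (verts Aux - {SC D})))\<^sup>*\<^sup>* (aux_node w) (aux_node w')"
    using Aux_separator nw nw' by metis
  let ?P = "\<lambda>z. aux_node z = SC D"
  have arcs: "\<exists>z\<in>set L. ?P z"
    if rot: "rotate n zs = ps @ L @ ss" and L: "w \<in> set L" "w' \<in> set L" for n ps L ss
  proof (rule ccontr)
    assume "\<not> (\<exists>z\<in>set L. ?P z)"
    moreover have "is_cycle (edges GH) (ps @ L @ ss)" using c rot is_cycle_rotate_n by metis
    then have "walk_edges L \<subseteq> edges GH" using is_cycle_walk_edges walk_edges_infix by blast
    moreover have "set L \<subseteq> verts GH" using sZ rot by (metis Un_iff set_append set_rotate subset_iff)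
    ultimately show False using aux_walk_avoiding L sep by blast
  qed
  have "\<not> ?P w" "\<not> ?P w'" using nw nw' by simp_all
  then have "\<exists>n x A y B. rotate n zs = x # A @ y # B \<and> ?P x \<and> ?P y \<and> w \<in> set A \<and> w' \<in> set B"
    by (elim cyclic_separation[of w zs ?P w', OF w(1) _ w'(1)]) (use arcs in blast)+
  then obtain n x A y B where rot: "rotate n zs = x # A @ y # B" "?P x" "?P y" "w \<in> set A"
    "w' \<in> set B" by blast
  have xy: "x \<in> S" "y \<in> S" "comp_S x = D" "comp_S y = D" using aux_node_SC rot(2,3) by metis+
  have "y \<in> comp_S y" unfolding comp_S_def using xy(2) S_G by auto
  then have "(adj (induced G S))\<^sup>*\<^sup>* x y" using xy(3,4) unfolding comp_S_def by auto
  then show ?thesis using that rot(1,4,5) xy(1,2) w(3) w'H(2) by blast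
qed

definition boundary_chord :: "'v \<Rightarrow> 'v list \<Rightarrow> 'v \<Rightarrow> 'v list \<Rightarrow> 'v list \<Rightarrow> bool" where
  "boundary_chord x A y B I \<longleftrightarrow> is_cycle (edges GH) (x # A @ y # B) \<and>
     (\<exists>a\<in>set A. a \<notin> S) \<and> (\<exists>b\<in>set B. b \<notin> S) \<and> distinct (x # I @ [y]) \<and>
     walk_edges (x # I @ [y]) \<subseteq> edges (induced G S) \<and> set (x # I @ [y]) \<subseteq> S"

lemma boundary_chord_swap: "boundary_chord x A y B I \<Longrightarrow> boundary_chord y B x A (rev I)"
  unfolding boundary_chord_def
  using is_cycle_rotate[of "edges GH" "x # A" "y # B"] walk_edges_rev[of "x # I @ [y]"] by auto

text \<open>Shortcutting along a chord that meets the cycle only at its ends splits the cycle into two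
  cycles with fewer vertices outside \<open>S\<close>, and the chord's edges are common to both.\<close>

lemma linked_cycle_if_disjoint_chord:
  assumes IH: "\<And>zs'. is_cycle (edges GH) zs' \<Longrightarrow> card (set zs' - S) < card (set (x # A @ y # B) - S) \<Longrightarrow>
      linked_edges (cycle_edges zs')"
    and chord: "boundary_chord x A y B I" and disj: "set I \<inter> set (x # A @ y # B) = {}"
  shows "linked_edges (cycle_edges (x # A @ y # B))"
proof -
  let ?Z = "x # A @ y # B" and ?Q = "x # I @ [y]"
  define Z1 where "Z1 = x # A @ y # rev I"
  define Z2 where "Z2 = y # B @ x # I"
  have cZ: "is_cycle (edges GH) ?Z" and a: "\<exists>a\<in>set A. a \<notin> S" and b: "\<exists>b\<in>set B. b \<notin> S"
    and dQ: "distinct ?Q" and Q: "walk_edges ?Q \<subseteq> edges (induced G S)" and QS: "set ?Q \<subseteq> S"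
    using chord unfolding boundary_chord_def by auto
  have dZ: "distinct ?Z" using cZ unfolding is_cycle_def by blast
  have ceZ: "cycle_edges ?Z = walk_edges (x # A @ [y]) \<union> walk_edges (y # B @ [x])"
    by (rule cycle_edges_split)
  have ceZ1: "cycle_edges Z1 = walk_edges (x # A @ [y]) \<union> walk_edges ?Q"
    unfolding Z1_def cycle_edges_split using walk_edges_rev[of ?Q] by simp
  have ceZ2: "cycle_edges Z2 = walk_edges (y # B @ [x]) \<union> walk_edges ?Q"
    unfolding Z2_def cycle_edges_split by simp
  have Q_GH: "walk_edges ?Q \<subseteq> edges GH" using Q by auto
  have Z_GH: "cycle_edges ?Z \<subseteq> edges GH" using cZ unfolding is_cycle_def by blast
  have AB: "A \<noteq> []" "B \<noteq> []" "set A \<inter> set B = {}" using a b dZ by auto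
  have "is_cycle (edges GH) Z1" "is_cycle (edges GH) Z2"
    unfolding is_cycle_def using dZ dQ disj AB ceZ ceZ1 ceZ2 Q_GH Z_GH
    by (auto simp: Z1_def Z2_def Suc_le_eq)
  moreover have "card (set Z1 - S) < card (set ?Z - S)" "card (set Z2 - S) < card (set ?Z - S)"
  proof -
    have "set Z1 - S = set A - S" "set Z2 - S = set B - S" using QS unfolding Z1_def Z2_def by auto
    then have "set Z1 - S \<subset> set ?Z - S" "set Z2 - S \<subset> set ?Z - S" using a b AB(3) by auto
    then show "card (set Z1 - S) < card (set ?Z - S)" "card (set Z2 - S) < card (set ?Z - S)"
      by (simp_all add: psubset_card_mono)
  qed
  ultimately have "linked_edges (cycle_edges Z1)" "linked_edges (cycle_edges Z2)" using IH by blast+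
  moreover have "{x, hd (I @ [y])} \<in> walk_edges ?Q" by (simp add: walk_edges_Cons)
  ultimately have "linked_edges (cycle_edges Z1 \<union> cycle_edges Z2)"
    using ceZ1 ceZ2 by (intro linked_edges_Un) auto
  then show ?thesis using ceZ ceZ1 ceZ2 linked_edges_subset by blast
qed

text \<open>A chord through a vertex \<open>q\<close> of the arc \<open>A\<close> is cut at \<open>q\<close>; one of the two halves is again
  a chord, of a resplitting of the same cycle.\<close>

lemma linked_cycle_if_chord_meets_arc:
  assumes shorter: "\<And>x A y B I'. length I' < n \<Longrightarrow> boundary_chord x A y B I' \<Longrightarrow>
      set (x # A @ y # B) = Z \<Longrightarrow> linked_edges (cycle_edges (x # A @ y # B))"
    and chord: "boundary_chord x A y B I" and Z: "set (x # A @ y # B) = Z" and n: "length I = n"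
    and q: "q \<in> set I" "q \<in> set A"
  shows "linked_edges (cycle_edges (x # A @ y # B))"
proof -
  obtain I1 I2 where I: "I = I1 @ q # I2" using split_list[OF q(1)] by blast
  obtain A1 A2 where A: "A = A1 @ q # A2" using split_list[OF q(2)] by blast
  have cZ: "is_cycle (edges GH) (x # A @ y # B)" and b: "\<exists>b\<in>set B. b \<notin> S"
    and dQ: "distinct (x # I @ [y])" and Q: "walk_edges (x # I @ [y]) \<subseteq> edges (induced G S)"
    and QS: "set (x # I @ [y]) \<subseteq> S"
    using chord unfolding boundary_chord_def by auto
  have Q_eq: "x # I @ [y] = (x # I1 @ [q]) @ (I2 @ [y])" "x # I @ [y] = (x # I1) @ (q # I2 @ [y])"
    using I by simp_all
  have Q1: "walk_edges (x # I1 @ [q]) \<subseteq> edges (induced G S)"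
    using Q walk_edges_append_left[of "x # I1 @ [q]" "I2 @ [y]"] Q_eq(1) by auto
  have Q2: "walk_edges (q # I2 @ [y]) \<subseteq> edges (induced G S)"
    using Q walk_edges_append_right[of "q # I2 @ [y]" "x # I1"] Q_eq(2) by auto
  obtain a where a: "a \<in> set A" "a \<notin> S" using chord unfolding boundary_chord_def by blast
  then have "a \<in> set A1 \<or> a \<in> set A2" using A QS I by auto
  then show ?thesis
  proof
    assume "a \<in> set A1"
    then have "boundary_chord x A1 q (A2 @ y # B) I1"
      unfolding boundary_chord_def using cZ a b dQ Q1 QS A I by auto
    moreover have "set (x # A1 @ q # A2 @ y # B) = Z" using Z A by simp
    ultimately show ?thesis using shorter[of I1] n A I by simp
  next
    assume "a \<in> set A2"
    have rot: "q # A2 @ y # B @ x # A1 = (q # A2 @ y # B) @ (x # A1)"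
      "x # A @ y # B = (x # A1) @ (q # A2 @ y # B)" using A by simp_all
    have "is_cycle (edges GH) (q # A2 @ y # B @ x # A1)"
      using cZ rot is_cycle_rotate by metis
    then have "boundary_chord q A2 y (B @ x # A1) I2"
      unfolding boundary_chord_def using \<open>a \<in> set A2\<close> a b dQ Q2 QS I by auto
    moreover have "set (q # A2 @ y # B @ x # A1) = Z" using Z A by auto
    ultimately have "linked_edges (cycle_edges (q # A2 @ y # B @ x # A1))"
      using shorter[of I2] n I by simp
    then show ?thesis using rot cycle_edges_rotate by metis
  qed
qed

lemma linked_cycle_if_boundary_chord:
  assumes IH: "\<And>zs'. is_cycle (edges GH) zs' \<Longrightarrow> card (set zs' - S) < card Z \<Longrightarrow>
      linked_edges (cycle_edges zs')"
    and "boundary_chord x A y B I" "set (x # A @ y # B) - S = Z"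
  shows "linked_edges (cycle_edges (x # A @ y # B))"
  using assms(2,3)
proof (induction "length I" arbitrary: x A y B I rule: less_induct)
  case less
  let ?Z = "set (x # A @ y # B)"
  have shorter: "linked_edges (cycle_edges (x' # A' @ y' # B'))"
    if "length I' < length I" "boundary_chord x' A' y' B' I'" "set (x' # A' @ y' # B') = ?Z"
    for x' A' y' B' I'
    using less.hyps[OF that(1,2)] that(3) less.prems(2) by simp
  show ?case
  proof (cases "set I \<inter> ?Z = {}")
    case True
    then show ?thesis
      using linked_cycle_if_disjoint_chord[OF _ less.prems(1) True] IH less.prems(2) by blast
  next
    case False
    then obtain q where q: "q \<in> set I" "q \<in> ?Z" by blast
    have "q \<noteq> x" "q \<noteq> y" using q(1) less.prems(1) unfolding boundary_chord_def by auto
    then consider "q \<in> set A" | "q \<in> set B" using q(2) by auto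
    then show ?thesis
    proof cases
      case 1
      show ?thesis
      proof (rule linked_cycle_if_chord_meets_arc[where n = "length I" and Z = ?Z and q = q])
        show "linked_edges (cycle_edges (x' # A' @ y' # B'))"
          if "length I' < length I" "boundary_chord x' A' y' B' I'" "set (x' # A' @ y' # B') = ?Z"
          for x' A' y' B' I'
          using that by (rule shorter)
      qed (use less.prems(1) q(1) 1 in simp_all)
    next
      case 2
      have "linked_edges (cycle_edges (y # B @ x # A))"
      proof (rule linked_cycle_if_chord_meets_arc
          [where n = "length I" and Z = ?Z and q = q and I = "rev I"])
        show "linked_edges (cycle_edges (x' # A' @ y' # B'))"
          if "length I' < length I" "boundary_chord x' A' y' B' I'" "set (x' # A' @ y' # B') = ?Z"
          for x' A' y' B' I'
          using that by (rule shorter)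
      qed (use boundary_chord_swap[OF less.prems(1)] q(1) 2 in auto)
      then show ?thesis using cycle_edges_rotate[of "x # A" "y # B"] by simp
    qed
  qed
qed

lemma linked_cycle:
  assumes "is_cycle (edges GH) zs"
  shows "linked_edges (cycle_edges zs)"
  using assms
proof (induction "card (set zs - S)" arbitrary: zs rule: less_induct)
  case less
  have c: "is_cycle (edges GH) zs" by (rule less.prems)
  have sZ: "set zs \<subseteq> verts GH" using is_cycle_verts[OF wf_GH c] .
  consider "set zs \<subseteq> verts G" | "set zs \<subseteq> verts H" | w w' where "w \<in> set zs" "w \<notin> verts H"
    "w' \<in> set zs" "w' \<notin> verts G"
    by blast
  then show ?case
  proof cases
    case 1
    then show ?thesis using linked_cycle_in_G[OF c] by blast
  next
    case 2
    then show ?thesis using linked_cycle_in_H[OF c] by blast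
  next
    case 3
    then have "w \<in> verts G" "w \<notin> S" using sZ S_H by auto
    then obtain n x A y B where rot: "rotate n zs = x # A @ y # B" and xy: "x \<in> S" "y \<in> S"
      "(adj (induced G S))\<^sup>*\<^sup>* x y" and AB: "\<exists>a\<in>set A. a \<notin> S" "\<exists>b\<in>set B. b \<notin> S"
      using cycle_crosses_boundary_component[OF c 3(1) _ _ 3(3,4)] by blast
    have cZ: "is_cycle (edges GH) (x # A @ y # B)" using c rot is_cycle_rotate_n by metis
    then have "x \<noteq> y" unfolding is_cycle_def by auto
    obtain Q where Q: "Q \<noteq> []" "hd Q = x" "last Q = y" "walk_edges Q \<subseteq> edges (induced G S)"
      "distinct Q"
      using rtranclp_adj_path_exists[OF xy(3)] by blast
    obtain I where I: "Q = x # I @ [y]"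
      using Q(1-3) \<open>x \<noteq> y\<close> by (cases Q; cases "tl Q" rule: rev_cases) auto
    have "set Q \<subseteq> S" using walk_set_subset[OF Q(4)] Q(2) xy(1) by auto
    then have "boundary_chord x A y B I" unfolding boundary_chord_def using cZ AB Q I by simp
    moreover have "set (x # A @ y # B) - S = set zs - S" using rot by (metis set_rotate)
    ultimately have "linked_edges (cycle_edges (x # A @ y # B))"
      using linked_cycle_if_boundary_chord less.hyps by blast
    then show ?thesis using rot cycle_edges_rotate_n by metis
  qed
qed

lemma block_edges_linked:
  assumes F: "is_block GH F" and e: "e \<in> edges F" "e' \<in> edges F"
  shows "block_linked\<^sup>*\<^sup>* e e'"
proof (rule biconn_edges_closed_under_cycles[where P = "block_linked\<^sup>*\<^sup>* e"])
  have sF: "subgraph F GH" using block_subgraph[OF F] .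
  show "wf_graph F" using sF by (rule subgraph_wf)
  show "biconn F" using block_biconn[OF F] .
  fix zs assume c: "is_cycle (edges F) zs" and "\<exists>f\<in>cycle_edges zs. block_linked\<^sup>*\<^sup>* e f"
  moreover have "linked_edges (cycle_edges zs)"
    using linked_cycle is_cycle_mono[OF c] sF unfolding subgraph_def by blast
  ultimately show "\<forall>f\<in>cycle_edges zs. block_linked\<^sup>*\<^sup>* e f"
    unfolding linked_edges_def by (meson rtranclp_trans)
qed (use e in auto)

abbreviation "boundary_blocks \<equiv> nontriv_blocks (induced G S)"

lemma boundary_block_of_edge:
  assumes "e \<in> edges G" "e \<subseteq> S"
  obtains C where "C \<in> boundary_blocks" "e \<in> edges C"
proof -
  have e: "e \<in> edges (induced G S)" using assms by simp
  obtain C where C: "is_block (induced G S) C" "e \<in> edges C"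
    using ex_block_with_edge[OF wf_graph_induced[OF wf_G] e] by blast
  have wC: "wf_graph C" using block_wf[OF C(1)] .
  obtain u v where uv: "e = {u, v}" "u \<noteq> v" using wf_graph_edgeE[OF wC C(2)] by metis
  have "e \<subseteq> verts C" using wf_graph_edge_subset[OF wC C(2)] .
  moreover have "finite (verts C)" using wC unfolding wf_graph_def by blast
  ultimately have "card e \<le> card (verts C)" by (rule card_mono[rotated])
  then have "C \<in> boundary_blocks" unfolding nontriv_blocks_def using C(1) uv by simp
  then show ?thesis using that C(2) by blast
qed

lemma boundary_block_subgraph:
  assumes "C \<in> boundary_blocks"
  shows "subgraph C G" "subgraph C H" "biconn C"
proof -
  have b: "is_block (induced G S) C" using assms unfolding nontriv_blocks_def by blast
  have wC: "wf_graph C" using block_wf[OF b] .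
  have vs: "verts C \<subseteq> verts G \<inter> S" and es: "edges C \<subseteq> {e \<in> edges G. e \<subseteq> S}"
    using block_subgraph[OF b] unfolding subgraph_def by auto
  show "subgraph C G" unfolding subgraph_def using wC vs es by auto
  have "edges C \<subseteq> edges H" using es boundary_edge_H by blast
  then show "subgraph C H" unfolding subgraph_def using wC vs S_H by auto
  show "biconn C" using block_biconn[OF b] .
qed

lemma boundary_block_in_part_block:
  assumes C: "C \<in> boundary_blocks" "e \<in> edges C" and P: "part_block P" "e \<in> edges P"
  shows "subgraph C P"
proof -
  have wC: "wf_graph C" using boundary_block_subgraph(1)[OF C(1)] subgraph_wf by blast
  obtain u v where uv: "e = {u, v}" "u \<noteq> v" "u \<in> verts C" "v \<in> verts C"
    using wf_graph_edgeE[OF wC C(2)] by metis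
  consider "is_block G P" | "is_block H P" using P(1) unfolding part_block_def by blast
  then show ?thesis
  proof cases
    case 1
    have "u \<in> verts P" "v \<in> verts P" using wf_graph_edge_subset[OF block_wf[OF 1] P(2)] uv(1)
      by auto
    then show ?thesis
      using subgraph_block_if_two_common_verts[OF wf_G 1 boundary_block_subgraph(1,3)[OF C(1)] uv(2)]
        uv(3,4) by blast
  next
    case 2
    have "u \<in> verts P" "v \<in> verts P" using wf_graph_edge_subset[OF block_wf[OF 2] P(2)] uv(1)
      by auto
    then show ?thesis
      using subgraph_block_if_two_common_verts[OF wf_H 2 boundary_block_subgraph(2,3)[OF C(1)] uv(2)]
        uv(3,4) by blast
  qed
qed

lemma part_block_S_block:
  assumes "part_block P" "e \<in> edges P" "e \<subseteq> S"
  shows "S_block G S P \<or> S_block H S P"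
proof -
  have "e \<in> edges G" if "is_block G P" using block_subgraph[OF that] assms(2) unfolding subgraph_def
    by blast
  moreover have "e \<in> edges H" if "is_block H P" using block_subgraph[OF that] assms(2)
    unfolding subgraph_def by blast
  ultimately show ?thesis using assms unfolding part_block_def S_block_def by auto
qed

text \<open>Distinct blocks of one part share at most one vertex, and a vertex lying in both parts
  belongs to \<open>S\<close>; so an edge common to two part blocks is an edge of \<open>G[S]\<close>.\<close>

lemma part_blocks_common_edge:
  assumes P: "part_block P" "part_block P'" "P \<noteq> P'" "f \<in> edges P" "f \<in> edges P'"
  shows "f \<subseteq> S" "f \<in> edges G"
proof -
  have wP: "wf_graph P" "wf_graph P'" using P(1,2) block_wf unfolding part_block_def by blast+
  obtain u v where uv: "f = {u, v}" "u \<noteq> v" using wf_graph_edgeE[OF wP(1) P(4)] by metis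
  have inP: "u \<in> verts P" "v \<in> verts P" "u \<in> verts P'" "v \<in> verts P'"
    using wf_graph_edge_subset[OF wP(1) P(4)] wf_graph_edge_subset[OF wP(2) P(5)] uv by auto
  have "\<not> (is_block G P \<and> is_block G P')" "\<not> (is_block H P \<and> is_block H P')"
    using block_eq_if_two_common_verts[OF wf_G _ _ uv(2) inP(1,3,2,4)]
      block_eq_if_two_common_verts[OF wf_H _ _ uv(2) inP(1,3,2,4)] P(3) by blast+
  then have "f \<in> edges G" "f \<in> edges H"
    using P(1,2,4,5) block_subgraph unfolding part_block_def subgraph_def by blast+
  then have "f \<subseteq> verts G" "f \<subseteq> verts H"
    using wf_graph_edge_subset[OF wf_G] wf_graph_edge_subset[OF wf_H] by blast+
  then show "f \<subseteq> S" using common_vert_in_S by blast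
  show "f \<in> edges G" by fact
qed

definition respects_S_blocks :: "('v graph \<Rightarrow> 'a) \<Rightarrow> bool" where
  "respects_S_blocks g \<longleftrightarrow> (\<forall>C1\<in>boundary_blocks. \<forall>C2\<in>boundary_blocks.
     (\<exists>F'. S_block G S F' \<and> subgraph C1 F' \<and> subgraph C2 F') \<or>
     (\<exists>F'. S_block H S F' \<and> subgraph C1 F' \<and> subgraph C2 F') \<longrightarrow> g C1 = g C2)"

definition constant_near :: "('v graph \<Rightarrow> 'a) \<Rightarrow> 'a \<Rightarrow> 'v set \<Rightarrow> bool" where
  "constant_near g a f \<longleftrightarrow>
     (\<forall>P C. part_block P \<longrightarrow> f \<in> edges P \<longrightarrow> C \<in> boundary_blocks \<longrightarrow> subgraph C P \<longrightarrow> g C = a)"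

lemma respects_S_blocksD:
  assumes g: "respects_S_blocks g" and P: "part_block P" "e \<in> edges P" "e \<subseteq> S"
    and C: "C1 \<in> boundary_blocks" "C2 \<in> boundary_blocks" "subgraph C1 P" "subgraph C2 P"
  shows "g C1 = g C2"
  using part_block_S_block[OF P] g C unfolding respects_S_blocks_def by blast

lemma constant_near_boundary_block:
  assumes g: "respects_S_blocks g" and C0: "C0 \<in> boundary_blocks" "e \<in> edges C0"
  shows "constant_near g (g C0) e"
  unfolding constant_near_def
proof (intro allI impI)
  fix P C assume P: "part_block P" "e \<in> edges P" and C: "C \<in> boundary_blocks" "subgraph C P"
  have "e \<subseteq> S" using C0 unfolding nontriv_blocks_def is_block_def subgraph_def by auto
  then show "g C = g C0"
    using respects_S_blocksD[OF g P _ C(1) C0(1) C(2) boundary_block_in_part_block[OF C0 P]]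
      by blast
qed

lemma constant_near_block_linked:
  assumes g: "respects_S_blocks g" and f: "constant_near g a f" and ff': "block_linked f f'"
  shows "constant_near g a f'"
  unfolding constant_near_def
proof (intro allI impI)
  fix P C assume P: "part_block P" "f' \<in> edges P" and C: "C \<in> boundary_blocks" "subgraph C P"
  obtain P0 where P0: "part_block P0" "f \<in> edges P0" "f' \<in> edges P0"
    using ff' unfolding block_linked_def by blast
  show "g C = a"
  proof (cases "P = P0")
    case True then show ?thesis using f P0 C unfolding constant_near_def by blast
  next
    case False
    have f': "f' \<subseteq> S" "f' \<in> edges G" using part_blocks_common_edge[OF P(1) P0(1) False P(2) P0(3)] .
    obtain C' where C': "C' \<in> boundary_blocks" "f' \<in> edges C'"
      using boundary_block_of_edge[OF f'(2,1)] .
    have "g C' = a"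
      using f P0(1,2) C'(1) boundary_block_in_part_block[OF C' P0(1,3)] unfolding constant_near_def
        by blast
    moreover have "g C = g C'"
      using respects_S_blocksD[OF g P f'(1) C(1) C'(1) C(2) boundary_block_in_part_block[OF C' P]] .
    ultimately show ?thesis by simp
  qed
qed

lemma constant_near_rtranclp:
  assumes g: "respects_S_blocks g" and ff': "block_linked\<^sup>*\<^sup>* f f'" and f: "constant_near g a f"
  shows "constant_near g a f'"
  using ff' f by (induction rule: rtranclp_induct) (auto intro: constant_near_block_linked[OF g])

lemma boundary_block_value:
  assumes "constant_near g a e" "C \<in> boundary_blocks" "e \<in> edges C"
  shows "g C = a"
proof -
  have "e \<in> edges G" using boundary_block_subgraph(1)[OF assms(2)] assms(3) unfolding subgraph_def
    by blast
  then obtain P where "is_block G P" "e \<in> edges P" using ex_block_with_edge[OF wf_G] by blast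
  then show ?thesis
    using assms boundary_block_in_part_block[OF assms(2,3)]
      unfolding constant_near_def part_block_def by blast
qed

lemma boundary_block_edge_in_block:
  assumes F: "is_block GH F" and B: "B \<in> boundary_blocks" "verts B \<subseteq> verts F"
  obtains e where "e \<in> edges B" "e \<in> edges F"
proof -
  have bB: "is_block (induced G S) B" using B(1) unfolding nontriv_blocks_def by blast
  have two: "2 \<le> card (verts B)" using B(1) unfolding nontriv_blocks_def by blast
  then have "finite (verts B)" using card.infinite by force
  then obtain u v where uv: "u \<in> verts B" "v \<in> verts B" "u \<noteq> v"
    using two card_le_Suc0_iff_eq[of "verts B"] by auto
  obtain w where "adj B u w"
    using biconn_rtranclp_adj[OF block_biconn[OF bB] uv(1,2)] uv(3)
      by (cases rule: converse_rtranclpE) auto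
  then have e: "{u, w} \<in> edges B" unfolding adj_def .
  then have "{u, w} \<in> edges G" using block_subgraph[OF bB] unfolding subgraph_def by auto
  moreover have "u \<noteq> w" "w \<in> verts B" using wf_graph_edgeE[OF block_wf[OF bB] e]
    by (auto simp: doubleton_eq_iff)
  ultimately have "{u, w} \<in> edges F"
    using block_contains_edge[OF wf_GH F] uv(1) B(2) by auto
  then show ?thesis using that e by blast
qed

end

theorem lemma3p5:
  fixes A :: "'a set" and G H F B1 B2 :: "'v graph" and S :: "'v set" and d :: nat
    and labG labH :: "'v \<Rightarrow> nat" and g :: "'v graph \<Rightarrow> 'a"
  assumes "labeled_boundaried d G S labG"
    and "labeled_boundaried d H S labH"
    and "compatible G labG H labH S"
    and "\<forall>B\<in>nontriv_blocks (induced G S). g B \<in> A"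
    and "\<forall>F'. S_block G S F' \<or> S_block H S F' \<longrightarrow> chordal F'"
    and "\<not> has_cycle (aux_sum G H S)"
    and "\<forall>C1\<in>nontriv_blocks (induced G S). \<forall>C2\<in>nontriv_blocks (induced G S).
           (\<exists>F'. S_block G S F' \<and> subgraph C1 F' \<and> subgraph C2 F') \<or>
           (\<exists>F'. S_block H S F' \<and> subgraph C1 F' \<and> subgraph C2 F') \<longrightarrow> g C1 = g C2"
    and "S_block (bsum G H) S F"
    and "B1 \<in> nontriv_blocks (induced G S)"
    and "B2 \<in> nontriv_blocks (induced G S)"
    and "verts B1 \<subseteq> verts F" and "verts B2 \<subseteq> verts F"
  shows "g B1 = g B2"
proof -
  interpret boundaried_sum G H S
    using assms(1-3,6) unfolding labeled_boundaried_def compatible_def by unfold_locales auto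
  have g: "respects_S_blocks g" unfolding respects_S_blocks_def using assms(7) by blast
  have F: "is_block GH F" using assms(8) unfolding S_block_def bsum_def by blast
  obtain e1 where e1: "e1 \<in> edges B1" "e1 \<in> edges F"
    using boundary_block_edge_in_block[OF F assms(9,11)] .
  obtain e2 where e2: "e2 \<in> edges B2" "e2 \<in> edges F"
    using boundary_block_edge_in_block[OF F assms(10,12)] .
  have "constant_near g (g B1) e1" using constant_near_boundary_block[OF g assms(9) e1(1)] .
  then have "constant_near g (g B1) e2"
    using constant_near_rtranclp[OF g block_edges_linked[OF F e1(2) e2(2)]] by blast
  from boundary_block_value[OF this assms(10) e2(1)] show ?thesis by simp
qed

end
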